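(* Let $p,q\ge 1$ be integers with $p+q\ge 3$. Then: (i) $\mathbb{O}_{p,q}\simeq\mathbb{O}_{q,p}$ as graded algebras; (ii) $\mathbb{O}_{p,q+4}\simeq\mathbb{O}_{p+4,q}$ as graded algebras; (iii) every isomorphism preserving the structure of $\mathbb{Z}_2^n$-graded algebra between algebras $\mathbb{O}_{p,q}$ and $\mathbb{O}_{p',q'}$ (with $p,q,p',q'\ge 1$, $p+q=p'+q'=n$) is a combination of the isomorphisms in (i) and (ii); that is, such an isomorphism exists only if $(p',q')$ can be obtained from $(p,q)$ by finitely many applications of the isomorphisms in (i) and (ii); (iv) for $n\ge 5$, there is no isomorphism preserving the structure of $\mathbb{Z}_2^n$-graded algebra between $\mathbb{O}_{n,0}$ and $\mathbb{O}_{0,n}$, nor between either of them and any $\mathbb{O}_{p,q}$ with $p+q=n$, $(p,q)\notin\{(n,0),(0,n)\}$.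
   Context: $\mathbb{Z}_2=\{0,1\}$ is the field of two elements. For $f:\mathbb{Z}_2^n\times\mathbb{Z}_2^n\to\mathbb{Z}_2$, the twisted group algebra $(\mathbb{R}[\mathbb{Z}_2^n],f)$ is the real vector space with basis $\{u_x: x\in\mathbb{Z}_2^n\}$ and bilinear product $u_x\cdot u_y=(-1)^{f(x,y)}u_{x+y}$. For integers $p,q\ge0$ with $n=p+q\ge3$, $\mathbb{O}_{p,q}$ is the twisted group algebra with $f(x,y)=\sum_{1\le i<j<k\le n}(x_ix_jy_k+x_iy_jx_k+y_ix_jx_k)+\sum_{1\le i\le j\le n}x_iy_j+\sum_{1\le i\le p}x_iy_i$. An element is homogeneous if it is a scalar multiple of some $u_x$. An isomorphism preserving the structure of $\mathbb{Z}_2^n$-graded algebra (a graded isomorphism) between $\mathbb{O}_{p,q}$ and $\mathbb{O}_{p',q'}$, $p+q=p'+q'=n$, is a real algebra isomorphism sending homogeneous elements to homogeneous elements; "$\simeq$ as graded algebras" means such an isomorphism exists. *)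

theory Defs
  imports Complex_Main
begin

text \<open>Z_2^n is modelled as the subsets of {..<n} (x_i = 1 iff i \<in> x, indices 0-based);
addition in Z_2^n is symmetric difference.  An element of the twisted group algebra
is its coefficient function w.r.t. the basis u_x, supported on Pow {..<n}.\<close>

definition zadd :: "nat set \<Rightarrow> nat set \<Rightarrow> nat set" where
  "zadd x y = (x - y) \<union> (y - x)"

definition bit :: "nat set \<Rightarrow> nat \<Rightarrow> nat" where
  "bit x i = (if i \<in> x then 1 else 0)"

text \<open>The twisting function f of O_{p,q}, with n = p + q (indices shifted to 0..n-1).\<close>
definition fO :: "nat \<Rightarrow> nat \<Rightarrow> nat set \<Rightarrow> nat set \<Rightarrow> nat" where
  "fO p q x y = (let n = p + q in
     (\<Sum>i<n. \<Sum>j<n. \<Sum>k<n. if i < j \<and> j < k then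
         bit x i * bit x j * bit y k + bit x i * bit y j * bit x k + bit y i * bit x j * bit x k
       else 0)
     + (\<Sum>i<n. \<Sum>j<n. if i \<le> j then bit x i * bit y j else 0)
     + (\<Sum>i<p. bit x i * bit y i))"

definition alg_carrier :: "nat \<Rightarrow> (nat set \<Rightarrow> real) set" where
  "alg_carrier n = {a. \<forall>x. \<not> x \<subseteq> {..<n} \<longrightarrow> a x = 0}"

definition ubasis :: "nat set \<Rightarrow> nat set \<Rightarrow> real" where
  "ubasis x = (\<lambda>z. if z = x then 1 else 0)"

definition omult :: "nat \<Rightarrow> nat \<Rightarrow> (nat set \<Rightarrow> real) \<Rightarrow> (nat set \<Rightarrow> real) \<Rightarrow> (nat set \<Rightarrow> real)" where
  "omult p q a b = (\<lambda>z. \<Sum>x\<in>Pow {..<p+q}. \<Sum>y\<in>Pow {..<p+q}.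
      if zadd x y = z then (-1) ^ fO p q x y * a x * b y else 0)"

definition homogeneous :: "nat \<Rightarrow> (nat set \<Rightarrow> real) \<Rightarrow> bool" where
  "homogeneous n a \<longleftrightarrow> (\<exists>c x. x \<subseteq> {..<n} \<and> a = (\<lambda>z. c * ubasis x z))"

definition graded_iso :: "nat \<Rightarrow> nat \<Rightarrow> nat \<Rightarrow> nat \<Rightarrow> ((nat set \<Rightarrow> real) \<Rightarrow> (nat set \<Rightarrow> real)) \<Rightarrow> bool" where
  "graded_iso p q p' q' \<phi> \<longleftrightarrow>
     p + q = p' + q' \<and>
     bij_betw \<phi> (alg_carrier (p+q)) (alg_carrier (p'+q')) \<and>
     (\<forall>a\<in>alg_carrier (p+q). \<forall>b\<in>alg_carrier (p+q). \<phi> (\<lambda>z. a z + b z) = (\<lambda>z. \<phi> a z + \<phi> b z)) \<and>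
     (\<forall>c::real. \<forall>a\<in>alg_carrier (p+q). \<phi> (\<lambda>z. c * a z) = (\<lambda>z. c * \<phi> a z)) \<and>
     (\<forall>a\<in>alg_carrier (p+q). \<forall>b\<in>alg_carrier (p+q). \<phi> (omult p q a b) = omult p' q' (\<phi> a) (\<phi> b)) \<and>
     (\<forall>a\<in>alg_carrier (p+q). homogeneous (p+q) a \<longrightarrow> homogeneous (p'+q') (\<phi> a))"

definition graded_isomorphic :: "nat \<Rightarrow> nat \<Rightarrow> nat \<Rightarrow> nat \<Rightarrow> bool" where
  "graded_isomorphic p q p' q' \<longleftrightarrow> (\<exists>\<phi>. graded_iso p q p' q' \<phi>)"

text \<open>One application of an isomorphism of type (i) or (ii) (either direction),
between algebras O_{a,b}, O_{c,d} with all indices \<ge> 1.\<close>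
definition oct_move :: "nat \<times> nat \<Rightarrow> nat \<times> nat \<Rightarrow> bool" where
  "oct_move ab cd \<longleftrightarrow> (case ab of (a, b) \<Rightarrow> a \<ge> 1 \<and> b \<ge> 1 \<and>
      (cd = (b, a) \<or> (b \<ge> 5 \<and> cd = (a + 4, b - 4)) \<or> (a \<ge> 5 \<and> cd = (a - 4, b + 4))))"

end

theory Submission
  imports Defs
begin

text \<open>Modulo 2 the twisting function of \<open>\<O>\<^sub>p\<^sub>,\<^sub>q\<close> depends only on a few parities:
  \<open>f(x,y) \<equiv> (|x| choose 2)|y| + (|x|+1)|x\<inter>y| + #{(i,j) | i \<in> x, j \<in> y, i \<le> j} + |x\<inter>y\<inter>{..<p}|\<close>.
  Hence an additive bijection \<open>\<tau>\<close> of \<open>\<int>\<^sub>2\<^sup>n\<close> for which \<open>f'(\<tau>x,\<tau>y) - f(x,y)\<close> is a coboundary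
  \<open>s(x) + s(y) + s(x+y)\<close> mod 2 induces the graded isomorphism \<open>u\<^sub>x \<mapsto> (-1)\<^bsup>s(x)\<^esup> u\<^sub>\<tau>\<^sub>x\<close>;
  reversing the generators gives (i), rotating them cyclically by one gives (ii), in both cases
  after translating \<open>x\<close> by a fixed set when a parity of \<open>x\<close> is odd.

  Conversely a graded isomorphism permutes the lines \<open>\<real>u\<^sub>x\<close> and preserves the sign of
  \<open>u\<^sub>x\<^sup>2 = \<plusminus>u\<^sub>0\<close>, so \<open>S(p,q) = \<Sum>\<^sub>x (-1)\<^bsup>f(x,x)\<^esup>\<close> is an invariant. Since \<open>f(x,x)\<close> is odd iff
  \<open>[|x| \<equiv> 2 mod 4] + |x\<inter>{p..<p+q}|\<close> is odd, a character sum over \<open>\<int>/4\<close> and the binomial theorem give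
  \<open>2S(p,q) = 2\<^sup>p0\<^sup>q + (1+i)\<^sup>p(1-i)\<^sup>q - 0\<^sup>p2\<^sup>q + (1-i)\<^sup>p(1+i)\<^sup>q\<close>. For \<open>p, q \<ge> 1\<close> this is
  \<open>(1+i)\<^bsup>p+q\<^esup>((-i)\<^sup>p + (-i)\<^sup>q)\<close>, which determines \<open>{p mod 4, q mod 4}\<close>, and the pairs with the same
  residues are connected by the moves (i) and (ii). For \<open>n \<ge> 5\<close> the term \<open>\<plusminus>2\<^sup>n\<close> separates
  \<open>\<O>\<^sub>n\<^sub>,\<^sub>0\<close> and \<open>\<O>\<^sub>0\<^sub>,\<^sub>n\<close> from each other and from all \<open>\<O>\<^sub>p\<^sub>,\<^sub>q\<close> with \<open>p, q \<ge> 1\<close>.\<close>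

section \<open>Parities of cardinalities\<close>

text \<open>For a set \<open>x\<close> of indices these are the parities of the elementary symmetric functions
  \<open>\<Sum>\<^sub>i x\<^sub>i\<close> and \<open>\<Sum>\<^sub>i\<^sub><\<^sub>j x\<^sub>i x\<^sub>j\<close> of its indicator vector.\<close>

definition odd_card :: "'a set \<Rightarrow> bool" where
  "odd_card A \<longleftrightarrow> odd (card A)"

definition odd_card2 :: "'a set \<Rightarrow> bool" where
  "odd_card2 A \<longleftrightarrow> odd (card A choose 2)"

lemma choose_two_Suc: "Suc m choose 2 = (m choose 2) + m"
  by (simp add: numeral_2_eq_2)

lemma choose_two_add: "(a + b) choose 2 = (a choose 2) + (b choose 2) + a * b"
  by (induction b) (simp_all add: choose_two_Suc)

lemma choose_two_double: "2 * (k choose 2) + k = k * k"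
  by (induction k) (simp_all add: choose_two_Suc algebra_simps)

lemma odd_card_empty [simp]: "\<not> odd_card {}"
  by (simp add: odd_card_def)

lemma odd_card2_empty [simp]: "\<not> odd_card2 {}"
  by (simp add: odd_card2_def numeral_2_eq_2)

lemma odd_card_image: "inj_on f A \<Longrightarrow> odd_card (f ` A) = odd_card A"
  by (simp add: odd_card_def card_image)

lemma odd_card2_image: "inj_on f A \<Longrightarrow> odd_card2 (f ` A) = odd_card2 A"
  by (simp add: odd_card2_def card_image)

lemma odd_card_Diff: "finite A \<Longrightarrow> odd_card (A - B) \<longleftrightarrow> odd_card A \<noteq> odd_card (A \<inter> B)"
  unfolding odd_card_def using card_Int_Diff[of A B] by (metis even_add)

lemma odd_card_sym_diff:
  assumes "finite A" "finite B"
  shows "odd_card (sym_diff A B) \<longleftrightarrow> odd_card A \<noteq> odd_card B"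
proof -
  have "card (sym_diff A B) = card (A - B) + card (B - A)"
    by (rule card_Un_disjoint) (use assms in auto)
  then have "card (sym_diff A B) + 2 * card (A \<inter> B) = card A + card B"
    using card_Int_Diff[OF assms(1), of B] card_Int_Diff[OF assms(2), of A] by (simp add: Int_commute)
  then show ?thesis
    unfolding odd_card_def by (metis even_add even_mult_iff even_numeral)
qed

lemma odd_card_Int_split:
  fixes x :: "nat set"
  assumes "x \<subseteq> {..<p + q}"
  shows "odd_card x \<longleftrightarrow> odd_card (x \<inter> {..<p}) \<noteq> odd_card (x \<inter> {p..<p + q})"
proof -
  have "x - {..<p} = x \<inter> {p..<p + q}"
    using assms by auto
  then show ?thesis
    using odd_card_Diff[of x "{..<p}"] finite_subset[OF assms] by auto
qed

lemma finite_zadd: "finite A \<Longrightarrow> finite B \<Longrightarrow> finite (zadd A B)"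
  by (simp add: zadd_def)

lemma zadd_subset: "x \<subseteq> A \<Longrightarrow> y \<subseteq> A \<Longrightarrow> zadd x y \<subseteq> A"
  by (auto simp: zadd_def)

lemma zadd_self [simp]: "zadd x x = {}"
  by (auto simp: zadd_def)

lemma zadd_empty [simp]: "zadd x {} = x" "zadd {} x = x"
  by (auto simp: zadd_def)

lemma zadd_assoc: "zadd (zadd x y) z = zadd x (zadd y z)"
  by (auto simp: zadd_def)

lemma zadd_Int_distrib: "zadd A B \<inter> C = zadd (A \<inter> C) (B \<inter> C)"
  by (auto simp: zadd_def)

lemma image_zadd:
  assumes "inj_on f U" "A \<subseteq> U" "B \<subseteq> U"
  shows "f ` zadd A B = zadd (f ` A) (f ` B)"
proof -
  have "f ` (A - B) = f ` A - f ` B" "f ` (B - A) = f ` B - f ` A"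
    using assms by (auto intro!: inj_on_image_set_diff[OF assms(1)])
  then show ?thesis
    unfolding zadd_def by (simp add: image_Un)
qed

lemma odd_card_zadd:
  "finite A \<Longrightarrow> finite B \<Longrightarrow> odd_card (zadd A B) \<longleftrightarrow> odd_card A \<noteq> odd_card B"
  unfolding zadd_def by (rule odd_card_sym_diff)

lemma odd_card2_zadd:
  assumes "finite A" "finite B"
  shows "odd_card2 (zadd A B) \<longleftrightarrow>
    ((odd_card2 A \<noteq> odd_card2 B) \<noteq> (odd_card A \<and> odd_card B)) \<noteq> odd_card (A \<inter> B)"
proof -
  define u w c where "u = card (A - B)" and "w = card (B - A)" and "c = card (A \<inter> B)"
  have z: "card (zadd A B) = u + w"
    unfolding zadd_def u_def w_def by (rule card_Un_disjoint) (use assms in auto)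
  have a: "card A = c + u" and b: "card B = c + w"
    using card_Int_Diff[OF assms(1), of B] card_Int_Diff[OF assms(2), of A]
    by (simp_all add: u_def w_def c_def Int_commute)
  have "(c + u) * (c + w) + c = 2 * (c choose 2) + 2 * c + c * w + c * u + u * w"
    using choose_two[of c] by (cases c) (auto simp: algebra_simps)
  then have "even ((u + w choose 2) + (c + u choose 2) + (c + w choose 2) + (c + u) * (c + w) + c)"
    by (simp add: choose_two_add algebra_simps)
  then show ?thesis
    unfolding odd_card2_def odd_card_def a b z c_def[symmetric] by (simp add: even_add even_mult_iff) argo
qed

definition le_pairs :: "nat set \<Rightarrow> nat set \<Rightarrow> nat" where
  "le_pairs A B = card {(i, j). i \<in> A \<and> j \<in> B \<and> i \<le> j}"

lemma finite_le_pairs_set: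
  "finite A \<Longrightarrow> finite B \<Longrightarrow> finite {(i, j). i \<in> A \<and> j \<in> B \<and> i \<le> j}"
  by (rule finite_subset[of _ "A \<times> B"]) auto

lemma le_pairs_swap:
  assumes "finite A" "finite B"
  shows "le_pairs A B + le_pairs B A = card A * card B + card (A \<inter> B)"
proof -
  define X Y where "X = {(i, j). i \<in> A \<and> j \<in> B \<and> i \<le> j}" and "Y = {(i, j). i \<in> A \<and> j \<in> B \<and> j \<le> i}"
  have "le_pairs B A = card (prod.swap ` Y)"
    unfolding le_pairs_def Y_def by (intro arg_cong[where f = card]) auto
  then have LY: "le_pairs B A = card Y"
    by (simp add: card_image)
  have "finite X" "finite Y"
    unfolding X_def Y_def by (use assms in \<open>auto intro: finite_subset[of _ "A \<times> B"]\<close>)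
  then have "card (X \<union> Y) + card (X \<inter> Y) = card X + card Y"
    by (rule card_Un_Int[symmetric])
  moreover have "X \<union> Y = A \<times> B"
    unfolding X_def Y_def by auto
  moreover have "X \<inter> Y = (\<lambda>i. (i, i)) ` (A \<inter> B)"
    unfolding X_def Y_def by auto
  moreover have "card ((\<lambda>i. (i, i)) ` (A \<inter> B)) = card (A \<inter> B)"
    by (rule card_image) (auto simp: inj_on_def)
  ultimately show ?thesis
    using LY unfolding le_pairs_def X_def[symmetric] by (simp add: card_cartesian_product)
qed

lemma odd_le_pairs_self: "finite A \<Longrightarrow> odd (le_pairs A A) \<longleftrightarrow> odd_card2 A \<noteq> odd_card A"
proof -
  assume "finite A"
  then have "le_pairs A A + le_pairs A A = card A * card A + card A"
    using le_pairs_swap by simp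
  moreover have "2 * (card A choose 2) + card A = card A * card A"
    by (rule choose_two_double)
  ultimately have "le_pairs A A = (card A choose 2) + card A"
    by linarith
  then show ?thesis
    by (simp add: odd_card_def odd_card2_def)
qed

lemma odd_le_pairs_swap:
  "finite A \<Longrightarrow> finite B \<Longrightarrow>
    odd (le_pairs B A) \<longleftrightarrow> odd (le_pairs A B) \<noteq> ((odd_card A \<and> odd_card B) \<noteq> odd_card (A \<inter> B))"
  using le_pairs_swap[of A B] unfolding odd_card_def by (metis even_add even_mult_iff)

lemma le_pairs_singleton_right: "le_pairs A {b} = card {i \<in> A. i \<le> b}"
proof -
  have "{(i, j). i \<in> A \<and> j \<in> {b} \<and> i \<le> j} = (\<lambda>i. (i, b)) ` {i \<in> A. i \<le> b}"
    by auto
  then show ?thesis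
    unfolding le_pairs_def by (simp add: card_image inj_on_def)
qed

lemma le_pairs_singleton_left: "le_pairs {a} B = card {j \<in> B. a \<le> j}"
proof -
  have "{(i, j). i \<in> {a} \<and> j \<in> B \<and> i \<le> j} = (\<lambda>j. (a, j)) ` {j \<in> B. a \<le> j}"
    by auto
  then show ?thesis
    unfolding le_pairs_def by (simp add: card_image inj_on_def)
qed

lemma odd_le_pairs_zadd_left:
  assumes "finite A" "finite A'" "finite B"
  shows "odd (le_pairs (zadd A A') B) \<longleftrightarrow> odd (le_pairs A B) \<noteq> odd (le_pairs A' B)"
proof -
  have eq: "{(i, j). i \<in> zadd A A' \<and> j \<in> B \<and> i \<le> j} =
      sym_diff {(i, j). i \<in> A \<and> j \<in> B \<and> i \<le> j} {(i, j). i \<in> A' \<and> j \<in> B \<and> i \<le> j}"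
    by (auto simp: zadd_def)
  show ?thesis
    unfolding le_pairs_def eq
    using odd_card_sym_diff[OF finite_le_pairs_set finite_le_pairs_set, OF assms(1,3) assms(2,3)]
    by (simp add: odd_card_def)
qed

lemma odd_le_pairs_zadd_right:
  assumes "finite A" "finite B" "finite B'"
  shows "odd (le_pairs A (zadd B B')) \<longleftrightarrow> odd (le_pairs A B) \<noteq> odd (le_pairs A B')"
proof -
  have eq: "{(i, j). i \<in> A \<and> j \<in> zadd B B' \<and> i \<le> j} =
      sym_diff {(i, j). i \<in> A \<and> j \<in> B \<and> i \<le> j} {(i, j). i \<in> A \<and> j \<in> B' \<and> i \<le> j}"
    by (auto simp: zadd_def)
  show ?thesis
    unfolding le_pairs_def eq
    using odd_card_sym_diff[OF finite_le_pairs_set finite_le_pairs_set, OF assms(1,2) assms(1,3)]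
    by (simp add: odd_card_def)
qed

section \<open>The twisting function modulo 2\<close>

lemma bit_Int: "bit (x \<inter> y) i = bit x i * bit y i"
  by (simp add: bit_def)

lemma bit_cases: "bit x i = 0 \<or> bit x i = 1"
  by (simp add: bit_def)

lemma card_Int_lessThan_Suc: "card (x \<inter> {..<Suc m}) = card (x \<inter> {..<m}) + bit x m"
  by (simp add: lessThan_Suc bit_def)

lemma sum_bit: "(\<Sum>i<m. bit x i) = card (x \<inter> {..<m})"
  by (induction m) (simp_all add: card_Int_lessThan_Suc)

definition pair_sum :: "nat \<Rightarrow> nat set \<Rightarrow> nat" where
  "pair_sum m x = (\<Sum>i<m. \<Sum>j<m. if i < j then bit x i * bit x j else 0)"

definition cross_sum :: "nat \<Rightarrow> nat set \<Rightarrow> nat set \<Rightarrow> nat" where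
  "cross_sum m x y = (\<Sum>i<m. \<Sum>j<m. if i < j then bit x i * bit y j + bit y i * bit x j else 0)"

definition cubic_sum :: "nat \<Rightarrow> nat set \<Rightarrow> nat set \<Rightarrow> nat" where
  "cubic_sum m x y = (\<Sum>i<m. \<Sum>j<m. \<Sum>k<m. if i < j \<and> j < k then
     bit x i * bit x j * bit y k + bit x i * bit y j * bit x k + bit y i * bit x j * bit x k else 0)"

definition linear_sum :: "nat \<Rightarrow> nat set \<Rightarrow> nat set \<Rightarrow> nat" where
  "linear_sum m x y = (\<Sum>i<m. \<Sum>j<m. if i \<le> j then bit x i * bit y j else 0)"

lemma fO_eq_sums:
  "fO p q x y = cubic_sum (p + q) x y + linear_sum (p + q) x y + card (x \<inter> y \<inter> {..<p})"
proof -
  have "(\<Sum>i<p. bit x i * bit y i) = card (x \<inter> y \<inter> {..<p})"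
    by (simp add: bit_Int[symmetric] sum_bit)
  then show ?thesis
    by (simp add: fO_def cubic_sum_def linear_sum_def Let_def)
qed

lemma pair_sum_eq: "pair_sum m x = card (x \<inter> {..<m}) choose 2"
proof (induction m)
  case (Suc m)
  have "pair_sum (Suc m) x = pair_sum m x + (\<Sum>i<m. bit x i * bit x m)"
    by (simp add: pair_sum_def sum.distrib)
  also have "(\<Sum>i<m. bit x i * bit x m) = bit x m * card (x \<inter> {..<m})"
    by (simp add: sum_distrib_right[symmetric] sum_bit)
  finally show ?case
    using Suc bit_cases[of x m] by (auto simp: card_Int_lessThan_Suc choose_two_Suc)
qed (simp add: pair_sum_def)

lemma cross_sum_eq:
  "cross_sum m x y + card (x \<inter> y \<inter> {..<m}) = card (x \<inter> {..<m}) * card (y \<inter> {..<m})"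
proof (induction m)
  case (Suc m)
  have "cross_sum (Suc m) x y = cross_sum m x y + (\<Sum>i<m. bit x i * bit y m + bit y i * bit x m)"
    by (simp add: cross_sum_def sum.distrib)
  also have "(\<Sum>i<m. bit x i * bit y m + bit y i * bit x m) =
      bit y m * card (x \<inter> {..<m}) + bit x m * card (y \<inter> {..<m})"
    by (simp add: sum.distrib sum_distrib_left[symmetric] sum_distrib_right[symmetric] sum_bit
        mult.commute)
  finally show ?case
    using Suc.IH card_Int_lessThan_Suc[of "x \<inter> y" m] bit_cases[of x m] bit_cases[of y m]
    by (auto simp: card_Int_lessThan_Suc bit_Int algebra_simps)
qed (simp add: cross_sum_def)

lemma cubic_sum_Suc:
  "cubic_sum (Suc m) x y = cubic_sum m x y + bit y m * pair_sum m x + bit x m * cross_sum m x y"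
proof -
  have "cubic_sum (Suc m) x y = cubic_sum m x y + (\<Sum>i<m. \<Sum>j<m. if i < j then
      bit x i * bit x j * bit y m + bit x i * bit y j * bit x m + bit y i * bit x j * bit x m else 0)"
    by (simp add: cubic_sum_def sum.distrib)
  also have "(\<Sum>i<m. \<Sum>j<m. if i < j then
      bit x i * bit x j * bit y m + bit x i * bit y j * bit x m + bit y i * bit x j * bit x m else 0)
    = (\<Sum>i<m. \<Sum>j<m. bit y m * (if i < j then bit x i * bit x j else 0)
        + bit x m * (if i < j then bit x i * bit y j + bit y i * bit x j else 0))"
    by (intro sum.cong refl) (simp add: algebra_simps)
  also have "\<dots> = bit y m * pair_sum m x + bit x m * cross_sum m x y"
    by (simp add: pair_sum_def cross_sum_def sum.distrib sum_distrib_left)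
  finally show ?thesis
    by simp
qed

lemma odd_cubic_sum:
  "odd (cubic_sum m x y) \<longleftrightarrow>
    (odd_card2 (x \<inter> {..<m}) \<and> odd_card (y \<inter> {..<m})) \<noteq>
    (\<not> odd_card (x \<inter> {..<m}) \<and> odd_card (x \<inter> y \<inter> {..<m}))"
proof (induction m)
  case (Suc m)
  define a b c where "a = card (x \<inter> {..<m})" and "b = card (y \<inter> {..<m})"
    and "c = card (x \<inter> y \<inter> {..<m})"
  have IH: "odd (cubic_sum m x y) \<longleftrightarrow> (odd (a choose 2) \<and> odd b) \<noteq> (even a \<and> odd c)"
    using Suc.IH by (simp add: a_def b_def c_def odd_card_def odd_card2_def)
  have cross: "odd (cross_sum m x y) \<longleftrightarrow> odd (a * b) \<noteq> odd c"
    using cross_sum_eq[of m x y] unfolding a_def b_def c_def by (metis even_add)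
  have step: "cubic_sum (Suc m) x y = cubic_sum m x y + bit y m * (a choose 2) + bit x m * cross_sum m x y"
    by (simp add: cubic_sum_Suc pair_sum_eq a_def)
  have "card (x \<inter> y \<inter> {..<Suc m}) = c + bit x m * bit y m"
    using card_Int_lessThan_Suc[of "x \<inter> y" m] by (simp add: bit_Int c_def)
  moreover have "card (x \<inter> {..<Suc m}) = a + bit x m" "card (y \<inter> {..<Suc m}) = b + bit y m"
    by (simp_all add: card_Int_lessThan_Suc a_def b_def)
  moreover have "odd (cubic_sum (Suc m) x y) \<longleftrightarrow>
      (odd ((a + bit x m) choose 2) \<and> odd (b + bit y m)) \<noteq>
      (even (a + bit x m) \<and> odd (c + bit x m * bit y m))"
    using bit_cases[of x m] bit_cases[of y m] IH cross
    by (elim disjE) (auto simp: step choose_two_add choose_two_Suc)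
  ultimately show ?case
    by (simp add: odd_card_def odd_card2_def)
qed (simp add: cubic_sum_def)

lemma linear_sum_eq_le_pairs:
  assumes "x \<subseteq> {..<m}" "y \<subseteq> {..<m}"
  shows "linear_sum m x y = le_pairs x y"
proof -
  let ?S = "{(i, j). i \<in> x \<and> j \<in> y \<and> i \<le> j}"
  have "le_pairs x y = card ({..<m} \<times> {..<m} \<inter> ?S)"
    unfolding le_pairs_def using assms by (intro arg_cong[where f = card]) auto
  also have "\<dots> = (\<Sum>z\<in>{..<m} \<times> {..<m}. if z \<in> ?S then 1 else 0)"
    by (simp add: sum.If_cases)
  also have "\<dots> = (\<Sum>i<m. \<Sum>j<m. if (i, j) \<in> ?S then 1 else 0)"
    unfolding sum.cartesian_product by (intro sum.cong refl) (auto split: prod.split)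
  also have "\<dots> = linear_sum m x y"
    unfolding linear_sum_def by (intro sum.cong refl) (simp add: bit_def)
  finally show ?thesis
    by simp
qed

theorem odd_fO:
  assumes "x \<subseteq> {..<p + q}" "y \<subseteq> {..<p + q}"
  shows "odd (fO p q x y) \<longleftrightarrow>
    (((odd_card2 x \<and> odd_card y) \<noteq> (\<not> odd_card x \<and> odd_card (x \<inter> y))) \<noteq> odd (le_pairs x y))
      \<noteq> odd_card (x \<inter> y \<inter> {..<p})"
proof -
  have "x \<inter> {..<p + q} = x" "y \<inter> {..<p + q} = y" "x \<inter> y \<inter> {..<p + q} = x \<inter> y"
    using assms by auto
  then show ?thesis
    using odd_cubic_sum[of "p + q" x y] linear_sum_eq_le_pairs[OF assms]
    unfolding fO_eq_sums odd_card_def by auto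
qed

section \<open>Graded isomorphisms induced by relabellings of the grading group\<close>

context
  fixes p q p' q' :: nat and \<tau> :: "nat set \<Rightarrow> nat set" and s :: "nat set \<Rightarrow> nat"
  assumes same_dim: "p + q = p' + q'"
    and relabel_bij: "bij_betw \<tau> (Pow {..<p + q}) (Pow {..<p + q})"
    and relabel_zadd:
      "\<And>x y. x \<subseteq> {..<p + q} \<Longrightarrow> y \<subseteq> {..<p + q} \<Longrightarrow> \<tau> (zadd x y) = zadd (\<tau> x) (\<tau> y)"
    and relabel_twist: "\<And>x y. x \<subseteq> {..<p + q} \<Longrightarrow> y \<subseteq> {..<p + q} \<Longrightarrow>
      even (fO p' q' (\<tau> x) (\<tau> y) + fO p q x y + s x + s y + s (zadd x y))"
begin

definition signed_relabel :: "(nat set \<Rightarrow> real) \<Rightarrow> nat set \<Rightarrow> real" where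
  "signed_relabel a z =
    (let x = the_inv_into (Pow {..<p + q}) \<tau> z
     in if z \<in> Pow {..<p + q} then (-1) ^ s x * a x else 0)"

lemma relabel_mem: "x \<in> Pow {..<p + q} \<Longrightarrow> \<tau> x \<in> Pow {..<p + q}"
  by (rule bij_betw_apply[OF relabel_bij])

lemma relabel_eq_iff:
  "x \<in> Pow {..<p + q} \<Longrightarrow> y \<in> Pow {..<p + q} \<Longrightarrow> \<tau> x = \<tau> y \<longleftrightarrow> x = y"
  by (rule inj_on_eq_iff[OF bij_betw_imp_inj_on[OF relabel_bij]])

lemma relabel_surj:
  assumes "z \<in> Pow {..<p + q}"
  shows "\<exists>x \<in> Pow {..<p + q}. z = \<tau> x"
proof -
  have "z \<in> \<tau> ` Pow {..<p + q}"
    using assms bij_betw_imp_surj_on[OF relabel_bij] by (simp only:)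
  then show ?thesis
    by (simp only: image_iff)
qed

lemma signed_relabel_apply:
  assumes "x \<in> Pow {..<p + q}"
  shows "signed_relabel a (\<tau> x) = (-1) ^ s x * a x"
proof -
  have "the_inv_into (Pow {..<p + q}) \<tau> (\<tau> x) = x"
    by (rule the_inv_into_f_f[OF bij_betw_imp_inj_on[OF relabel_bij] assms])
  then show ?thesis
    using relabel_mem[OF assms] by (simp add: signed_relabel_def)
qed

lemma signed_relabel_outside: "z \<notin> Pow {..<p + q} \<Longrightarrow> signed_relabel a z = 0"
  by (simp add: signed_relabel_def)

lemma signed_relabel_eqI:
  assumes "\<And>x. x \<in> Pow {..<p + q} \<Longrightarrow> b (\<tau> x) = (-1) ^ s x * a x"
    and "\<And>z. z \<notin> Pow {..<p + q} \<Longrightarrow> b z = 0"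
  shows "signed_relabel a = b"
proof
  fix z
  show "signed_relabel a z = b z"
  proof (cases "z \<in> Pow {..<p + q}")
    case True
    then obtain x where "x \<in> Pow {..<p + q}" "z = \<tau> x"
      using relabel_surj by blast
    then show ?thesis
      using assms(1) signed_relabel_apply by simp
  next
    case False
    then show ?thesis
      using assms(2) signed_relabel_outside by simp
  qed
qed

lemma bij_signed_relabel: "bij_betw signed_relabel (alg_carrier (p + q)) (alg_carrier (p + q))"
proof (rule bij_betw_byWitness[where f' = "\<lambda>b x. if x \<in> Pow {..<p + q} then (-1) ^ s x * b (\<tau> x) else 0"])
  have sq: "(-1::real) ^ k * ((-1) ^ k * c) = c" for k c
    by (simp add: minus_one_power_iff)
  show "\<forall>a \<in> alg_carrier (p + q).
      (\<lambda>x. if x \<in> Pow {..<p + q} then (-1) ^ s x * signed_relabel a (\<tau> x) else 0) = a"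
  proof (intro ballI ext)
    fix a x
    assume "a \<in> alg_carrier (p + q)"
    then show "(if x \<in> Pow {..<p + q} then (-1) ^ s x * signed_relabel a (\<tau> x) else 0) = a x"
      by (cases "x \<in> Pow {..<p + q}") (simp_all add: signed_relabel_apply sq alg_carrier_def)
  qed
  show "\<forall>b \<in> alg_carrier (p + q).
      signed_relabel (\<lambda>x. if x \<in> Pow {..<p + q} then (-1) ^ s x * b (\<tau> x) else 0) = b"
  proof (intro ballI signed_relabel_eqI)
    fix b x z
    assume b: "b \<in> alg_carrier (p + q)"
    show "b (\<tau> x) = (-1) ^ s x * (if x \<in> Pow {..<p + q} then (-1) ^ s x * b (\<tau> x) else 0)"
      if "x \<in> Pow {..<p + q}"
      using that by (simp add: sq)
    show "b z = 0" if "z \<notin> Pow {..<p + q}"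
      using that b by (simp add: alg_carrier_def)
  qed
  show "signed_relabel ` alg_carrier (p + q) \<subseteq> alg_carrier (p + q)"
    by (simp add: alg_carrier_def signed_relabel_def image_subset_iff)
  show "(\<lambda>b x. if x \<in> Pow {..<p + q} then (-1) ^ s x * b (\<tau> x) else 0) ` alg_carrier (p + q)
      \<subseteq> alg_carrier (p + q)"
    by (simp add: alg_carrier_def image_subset_iff)
qed

lemma signed_relabel_ubasis:
  assumes "x \<in> Pow {..<p + q}"
  shows "signed_relabel (\<lambda>z. c * ubasis x z) = (\<lambda>z. (c * (-1) ^ s x) * ubasis (\<tau> x) z)"
proof (rule signed_relabel_eqI)
  show "c * (-1) ^ s x * ubasis (\<tau> x) (\<tau> x') = (-1) ^ s x' * (c * ubasis x x')"
    if "x' \<in> Pow {..<p + q}" for x'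
    using relabel_eq_iff[OF that assms] by (simp add: ubasis_def)
  show "c * (-1) ^ s x * ubasis (\<tau> x) z = 0" if "z \<notin> Pow {..<p + q}" for z
    using that relabel_mem[OF assms] by (auto simp: ubasis_def)
qed

lemma relabel_sign:
  assumes "x \<subseteq> {..<p + q}" "y \<subseteq> {..<p + q}"
  shows "(-1::real) ^ fO p' q' (\<tau> x) (\<tau> y) * (-1) ^ s x * (-1) ^ s y = (-1) ^ s (zadd x y) * (-1) ^ fO p q x y"
proof -
  have "even ((fO p' q' (\<tau> x) (\<tau> y) + s x + s y) + (s (zadd x y) + fO p q x y))"
    using relabel_twist[OF assms] by (simp add: algebra_simps)
  then have "(-1::real) ^ (fO p' q' (\<tau> x) (\<tau> y) + s x + s y) = (-1) ^ (s (zadd x y) + fO p q x y)"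
    by (simp add: minus_one_power_iff)
  then show ?thesis
    by (simp add: power_add)
qed

lemma signed_relabel_summand:
  assumes x: "x \<in> Pow {..<p + q}" and y: "y \<in> Pow {..<p + q}" and w: "w \<in> Pow {..<p + q}"
  shows "(if zadd (\<tau> x) (\<tau> y) = \<tau> w
      then (-1) ^ fO p' q' (\<tau> x) (\<tau> y) * signed_relabel a (\<tau> x) * signed_relabel b (\<tau> y) else 0) =
    (-1) ^ s w * (if zadd x y = w then (-1) ^ fO p q x y * a x * b y else 0)"
proof -
  have "zadd x y \<in> Pow {..<p + q}"
    using x y zadd_subset[of x "{..<p + q}" y] by simp
  then have "\<tau> (zadd x y) = \<tau> w \<longleftrightarrow> zadd x y = w"
    using w by (rule relabel_eq_iff)
  moreover have "\<tau> (zadd x y) = zadd (\<tau> x) (\<tau> y)"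
    using x y by (simp add: relabel_zadd)
  ultimately have eq: "zadd (\<tau> x) (\<tau> y) = \<tau> w \<longleftrightarrow> zadd x y = w"
    by simp
  show ?thesis
  proof (cases "zadd x y = w")
    case True
    have "(-1) ^ fO p' q' (\<tau> x) (\<tau> y) * signed_relabel a (\<tau> x) * signed_relabel b (\<tau> y)
        = ((-1) ^ fO p' q' (\<tau> x) (\<tau> y) * (-1) ^ s x * (-1) ^ s y) * (a x * b y)"
      by (simp add: signed_relabel_apply[OF x] signed_relabel_apply[OF y] mult_ac)
    also have "\<dots> = ((-1) ^ s w * (-1) ^ fO p q x y) * (a x * b y)"
      using relabel_sign[of x y] x y True by simp
    also have "\<dots> = (-1) ^ s w * ((-1) ^ fO p q x y * a x * b y)"
      by (simp only: mult.assoc)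
    finally show ?thesis
      using True eq by simp
  qed (use eq in simp)
qed

lemma signed_relabel_omult_apply:
  assumes "w \<in> Pow {..<p + q}"
  shows "omult p' q' (signed_relabel a) (signed_relabel b) (\<tau> w) = (-1) ^ s w * omult p q a b w"
proof -
  let ?U = "Pow {..<p + q}"
  have reindex: "(\<Sum>x'\<in>?U. g x') = (\<Sum>x\<in>?U. g (\<tau> x))" for g :: "nat set \<Rightarrow> real"
    by (rule sum.reindex_bij_betw[OF relabel_bij, symmetric])
  have "omult p' q' (signed_relabel a) (signed_relabel b) (\<tau> w) =
      (\<Sum>x\<in>?U. \<Sum>y\<in>?U. if zadd (\<tau> x) (\<tau> y) = \<tau> w
        then (-1) ^ fO p' q' (\<tau> x) (\<tau> y) * signed_relabel a (\<tau> x) * signed_relabel b (\<tau> y) else 0)"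
    unfolding omult_def same_dim[symmetric]
    by (subst reindex, rule sum.cong[OF refl], subst reindex, rule refl)
  also have "\<dots> = (\<Sum>x\<in>?U. \<Sum>y\<in>?U. (-1) ^ s w * (if zadd x y = w then (-1) ^ fO p q x y * a x * b y else 0))"
    by (intro sum.cong refl, rule signed_relabel_summand[OF _ _ assms]; assumption)
  also have "\<dots> = (-1) ^ s w * omult p q a b w"
    unfolding omult_def by (simp only: sum_distrib_left)
  finally show ?thesis .
qed

lemma signed_relabel_omult:
  "signed_relabel (omult p q a b) = omult p' q' (signed_relabel a) (signed_relabel b)"
proof (rule signed_relabel_eqI)
  show "omult p' q' (signed_relabel a) (signed_relabel b) (\<tau> x) = (-1) ^ s x * omult p q a b x"
    if "x \<in> Pow {..<p + q}" for x
    using signed_relabel_omult_apply[OF that] .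
  show "omult p' q' (signed_relabel a) (signed_relabel b) z = 0" if z: "z \<notin> Pow {..<p + q}" for z
  proof -
    have "zadd x y \<noteq> z" if "x \<in> Pow {..<p + q}" "y \<in> Pow {..<p + q}" for x y
      using that z zadd_subset[of x "{..<p + q}" y] by (metis PowD PowI)
    then show ?thesis
      unfolding omult_def same_dim[symmetric] by (intro sum.neutral ballI) simp
  qed
qed

lemma graded_iso_signed_relabel: "graded_iso p q p' q' signed_relabel"
proof -
  have "signed_relabel (\<lambda>z. a z + b z) = (\<lambda>z. signed_relabel a z + signed_relabel b z)" for a b
    by (simp add: signed_relabel_def Let_def fun_eq_iff distrib_left)
  moreover have "signed_relabel (\<lambda>z. c * a z) = (\<lambda>z. c * signed_relabel a z)" for c a
    by (simp add: signed_relabel_def Let_def fun_eq_iff mult.left_commute)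
  moreover have "homogeneous (p' + q') (signed_relabel a)" if hom: "homogeneous (p + q) a" for a
  proof -
    obtain c x where "x \<subseteq> {..<p + q}" and a: "a = (\<lambda>z. c * ubasis x z)"
      using hom unfolding homogeneous_def by blast
    then have x: "x \<in> Pow {..<p + q}"
      by simp
    have "signed_relabel a = (\<lambda>z. (c * (-1) ^ s x) * ubasis (\<tau> x) z)"
      unfolding a by (rule signed_relabel_ubasis[OF x])
    moreover have "\<tau> x \<subseteq> {..<p' + q'}"
      using relabel_mem[OF x] same_dim by simp
    ultimately show ?thesis
      unfolding homogeneous_def by blast
  qed
  ultimately show ?thesis
    using same_dim bij_signed_relabel signed_relabel_omult unfolding graded_iso_def by simp
qed

lemma graded_isomorphic_by_relabelling: "graded_isomorphic p q p' q'"
  using graded_iso_signed_relabel unfolding graded_isomorphic_def by blast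

end

definition cond_set :: "bool \<Rightarrow> nat set \<Rightarrow> nat set" where
  "cond_set e V = (if e then V else {})"

lemma zadd_cond_set_zadd:
  "zadd (zadd x y) (cond_set (e \<noteq> f) V) = zadd (zadd x (cond_set e V)) (zadd y (cond_set f V))"
  by (cases e; cases f) (auto simp: cond_set_def zadd_def)

lemma zadd_cond_set_subset: "x \<subseteq> A \<Longrightarrow> V \<subseteq> A \<Longrightarrow> zadd x (cond_set e V) \<subseteq> A"
  by (auto simp: cond_set_def zadd_def)

lemma odd_card_zadd_cond_set:
  "finite x \<Longrightarrow> finite V \<Longrightarrow> odd_card (zadd x (cond_set e V)) \<longleftrightarrow> odd_card x \<noteq> (e \<and> odd_card V)"
  by (cases e) (simp_all add: cond_set_def odd_card_zadd)

lemma odd_card2_zadd_cond_set: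
  "finite x \<Longrightarrow> finite V \<Longrightarrow> odd_card2 (zadd x (cond_set e V)) \<longleftrightarrow>
    odd_card2 x \<noteq> (e \<and> ((odd_card2 V \<noteq> (odd_card x \<and> odd_card V)) \<noteq> odd_card (x \<inter> V)))"
  by (cases e) (auto simp: cond_set_def odd_card2_zadd)

lemma odd_card_Int_zadd_cond_set:
  assumes "finite x" "finite y" "finite V"
  shows "odd_card (zadd x (cond_set e V) \<inter> zadd y (cond_set f V) \<inter> C) \<longleftrightarrow>
    ((odd_card (x \<inter> y \<inter> C) \<noteq> (f \<and> odd_card (x \<inter> C \<inter> V))) \<noteq> (e \<and> odd_card (y \<inter> C \<inter> V)))
      \<noteq> (e \<and> f \<and> odd_card (C \<inter> V))"
proof -
  have "zadd x V \<inter> y \<inter> C = zadd (x \<inter> y \<inter> C) (y \<inter> C \<inter> V)"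
    "x \<inter> zadd y V \<inter> C = zadd (x \<inter> y \<inter> C) (x \<inter> C \<inter> V)"
    "zadd x V \<inter> zadd y V \<inter> C = zadd (zadd (zadd (x \<inter> y \<inter> C) (x \<inter> C \<inter> V)) (y \<inter> C \<inter> V)) (C \<inter> V)"
    by (auto simp: zadd_def)
  then show ?thesis
    using assms by (cases e; cases f) (simp_all add: cond_set_def odd_card_zadd finite_zadd)
qed

lemma odd_le_pairs_zadd_cond_set:
  assumes "finite x" "finite y" "finite V"
  shows "odd (le_pairs (zadd x (cond_set e V)) (zadd y (cond_set f V))) \<longleftrightarrow>
    ((odd (le_pairs x y) \<noteq> (f \<and> odd (le_pairs x V))) \<noteq> (e \<and> odd (le_pairs V y)))
      \<noteq> (e \<and> f \<and> odd (le_pairs V V))"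
  using assms by (cases e; cases f)
    (auto simp: cond_set_def odd_le_pairs_zadd_left odd_le_pairs_zadd_right finite_zadd)

section \<open>The isomorphism \<open>\<O>\<^sub>p\<^sub>,\<^sub>q \<cong> \<O>\<^sub>q\<^sub>,\<^sub>p\<close>\<close>

definition reverse_index :: "nat \<Rightarrow> nat \<Rightarrow> nat" where
  "reverse_index n k = n - 1 - k"

lemma inj_on_reverse_index: "inj_on (reverse_index n) {..<n}"
  by (auto simp: inj_on_def reverse_index_def)

lemma reverse_index_reverse_index: "k < n \<Longrightarrow> reverse_index n (reverse_index n k) = k"
  by (simp add: reverse_index_def)

lemma le_pairs_reverse_index:
  assumes "A \<subseteq> {..<n}" "B \<subseteq> {..<n}"
  shows "le_pairs (reverse_index n ` A) (reverse_index n ` B) = le_pairs B A"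
proof -
  let ?r = "reverse_index n"
  have "{(i, j). i \<in> ?r ` A \<and> j \<in> ?r ` B \<and> i \<le> j} =
      (\<lambda>(i, j). (?r j, ?r i)) ` {(i, j). i \<in> B \<and> j \<in> A \<and> i \<le> j}"
  proof (rule set_eqI, rule iffI)
    fix z assume "z \<in> {(i, j). i \<in> ?r ` A \<and> j \<in> ?r ` B \<and> i \<le> j}"
    then obtain a b where z: "z = (?r a, ?r b)" "a \<in> A" "b \<in> B" "?r a \<le> ?r b"
      by auto
    then have "b \<le> a"
      using assms by (auto simp: reverse_index_def)
    then show "z \<in> (\<lambda>(i, j). (?r j, ?r i)) ` {(i, j). i \<in> B \<and> j \<in> A \<and> i \<le> j}"
      using z by (auto intro!: image_eqI[of _ _ "(b, a)"])
  next
    fix z assume "z \<in> (\<lambda>(i, j). (?r j, ?r i)) ` {(i, j). i \<in> B \<and> j \<in> A \<and> i \<le> j}"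
    then obtain a b where "z = (?r a, ?r b)" "a \<in> A" "b \<in> B" "b \<le> a"
      by auto
    then show "z \<in> {(i, j). i \<in> ?r ` A \<and> j \<in> ?r ` B \<and> i \<le> j}"
      using assms by (auto simp: reverse_index_def)
  qed
  moreover have "inj_on (\<lambda>(i, j). (?r j, ?r i)) {(i, j). i \<in> B \<and> j \<in> A \<and> i \<le> j}"
    using inj_on_reverse_index[of n] assms by (auto simp: inj_on_def)
  ultimately show ?thesis
    unfolding le_pairs_def by (simp add: card_image)
qed

lemma odd_fO_reverse_index:
  assumes X: "X \<subseteq> {..<p + q}" and Y: "Y \<subseteq> {..<p + q}"
  shows "odd (fO q p (reverse_index (p + q) ` X) (reverse_index (p + q) ` Y)) \<longleftrightarrow>
    (((odd_card2 X \<and> odd_card Y) \<noteq> (\<not> odd_card X \<and> odd_card (X \<inter> Y))) \<noteq> odd (le_pairs Y X))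
      \<noteq> odd_card (X \<inter> Y \<inter> {p..<p + q})"
proof -
  let ?r = "reverse_index (p + q)"
  have inj: "inj_on ?r A" if "A \<subseteq> {..<p + q}" for A
    using inj_on_reverse_index that by (rule inj_on_subset)
  have sub: "?r ` A \<subseteq> {..<q + p}" if "A \<subseteq> {..<p + q}" for A
    using that by (auto simp: reverse_index_def)
  have "?r ` X \<inter> ?r ` Y = ?r ` (X \<inter> Y)"
    using inj_on_image_Int[OF inj_on_reverse_index X Y] by simp
  moreover have "?r ` (X \<inter> Y) \<inter> {..<q} = ?r ` (X \<inter> Y \<inter> {p..<p + q})"
    using X by (force simp: reverse_index_def)
  ultimately show ?thesis
    using odd_fO[OF sub[OF X] sub[OF Y]] le_pairs_reverse_index[OF X Y] X Y
    by (simp add: odd_card_image odd_card2_image inj Int_assoc le_infI1)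
qed

context
  fixes p q :: nat
  assumes p_pos: "1 \<le> p" and q_pos: "1 \<le> q"
begin

definition swap_ends :: "nat set" where
  "swap_ends = {0, p + q - 1}"

definition swap_relabel :: "nat set \<Rightarrow> nat set" where
  "swap_relabel x = reverse_index (p + q) ` zadd x (cond_set (odd_card x) swap_ends)"

definition swap_sign :: "nat set \<Rightarrow> nat" where
  "swap_sign x = card (x \<inter> swap_ends) * card (x - swap_ends)"

lemma swap_ends_subset: "swap_ends \<subseteq> {..<p + q}"
  using q_pos by (auto simp: swap_ends_def)

lemma swap_ends_parity: "\<not> odd_card swap_ends" "odd_card2 swap_ends"
  using p_pos q_pos by (simp_all add: swap_ends_def odd_card_def odd_card2_def numeral_2_eq_2)

lemma odd_card_Int_swap_ends: "odd_card (A \<inter> swap_ends) \<longleftrightarrow> (0 \<in> A) \<noteq> (p + q - 1 \<in> A)"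
  using p_pos q_pos
  by (cases "0 \<in> A"; cases "p + q - 1 \<in> A") (auto simp: swap_ends_def odd_card_def Int_insert_right)

lemma odd_le_pairs_swap_ends_right:
  assumes "y \<subseteq> {..<p + q}"
  shows "odd (le_pairs y swap_ends) \<longleftrightarrow> (0 \<in> y) \<noteq> odd_card y"
proof -
  have "{i \<in> y. i \<le> 0} = (if 0 \<in> y then {0} else {})" "{i \<in> y. i \<le> p + q - 1} = y"
    using assms by auto
  moreover have "swap_ends = zadd {0} {p + q - 1}"
    using p_pos q_pos by (auto simp: swap_ends_def zadd_def)
  ultimately show ?thesis
    using finite_subset[OF assms]
    by (simp add: odd_le_pairs_zadd_right le_pairs_singleton_right odd_card_def)
qed

lemma odd_le_pairs_swap_ends_left:
  assumes "x \<subseteq> {..<p + q}"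
  shows "odd (le_pairs swap_ends x) \<longleftrightarrow> odd_card x \<noteq> (p + q - 1 \<in> x)"
proof -
  have "{j \<in> x. 0 \<le> j} = x"
    by auto
  moreover have "{j \<in> x. p + q - 1 \<le> j} = (if p + q - 1 \<in> x then {p + q - 1} else {})"
  proof (rule set_eqI)
    fix j
    have "j \<in> x \<Longrightarrow> j < p + q"
      using assms by auto
    then show "j \<in> {j \<in> x. p + q - 1 \<le> j} \<longleftrightarrow> j \<in> (if p + q - 1 \<in> x then {p + q - 1} else {})"
      by (cases "j = p + q - 1") auto
  qed
  moreover have "swap_ends = zadd {0} {p + q - 1}"
    using p_pos q_pos by (auto simp: swap_ends_def zadd_def)
  ultimately show ?thesis
    using finite_subset[OF assms]
    by (simp add: odd_le_pairs_zadd_left le_pairs_singleton_left odd_card_def)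
qed

lemma odd_swap_sign:
  "finite x \<Longrightarrow> odd (swap_sign x) \<longleftrightarrow> odd_card (x \<inter> swap_ends) \<and> (odd_card x \<noteq> odd_card (x \<inter> swap_ends))"
  using odd_card_Diff[of x swap_ends] by (simp add: swap_sign_def odd_card_def)


lemma swap_twist:
  assumes x: "x \<subseteq> {..<p + q}" and y: "y \<subseteq> {..<p + q}"
  shows "even (fO q p (swap_relabel x) (swap_relabel y) + fO p q x y
    + swap_sign x + swap_sign y + swap_sign (zadd x y))"
proof -
  define v Q where "v = swap_ends" and "Q = {p..<p + q}"
  define ex ey where "ex = odd_card x" and "ey = odd_card y"
  define X Y where "X = zadd x (cond_set ex v)" and "Y = zadd y (cond_set ey v)"
  have fin: "finite x" "finite y" "finite v" "finite (x \<inter> swap_ends)" "finite (y \<inter> swap_ends)"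
    using x y finite_subset by (auto simp: v_def swap_ends_def)
  have "X \<subseteq> {..<p + q}" "Y \<subseteq> {..<p + q}"
    using x y swap_ends_subset by (simp_all add: X_def Y_def v_def zadd_cond_set_subset)
  then have F1: "odd (fO q p (swap_relabel x) (swap_relabel y)) \<longleftrightarrow>
      (((odd_card2 X \<and> odd_card Y) \<noteq> (\<not> odd_card X \<and> odd_card (X \<inter> Y))) \<noteq> odd (le_pairs Y X))
        \<noteq> odd_card (X \<inter> Y \<inter> Q)"
    unfolding swap_relabel_def X_def Y_def ex_def ey_def v_def Q_def by (rule odd_fO_reverse_index)
  note F2 = odd_fO[OF x y]
  have v: "\<not> odd_card v" "odd_card2 v" "odd (le_pairs v v)"
    using swap_ends_parity odd_le_pairs_swap_ends_right[OF swap_ends_subset] by (simp_all add: v_def swap_ends_def)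
  have Q: "odd_card (x \<inter> Q \<inter> v) \<longleftrightarrow> p + q - 1 \<in> x" "odd_card (y \<inter> Q \<inter> v) \<longleftrightarrow> p + q - 1 \<in> y"
    "odd_card (Q \<inter> v)"
    using odd_card_Int_swap_ends[of "x \<inter> Q"] odd_card_Int_swap_ends[of "y \<inter> Q"]
      odd_card_Int_swap_ends[of Q] p_pos q_pos by (auto simp: Q_def v_def)
  have "odd_card X \<longleftrightarrow> ex" "odd_card Y \<longleftrightarrow> ey"
    "odd_card2 X \<longleftrightarrow> odd_card2 x \<noteq> (ex \<and> \<not> odd_card (x \<inter> v))"
    using odd_card_zadd_cond_set[OF fin(1,3)] odd_card_zadd_cond_set[OF fin(2,3)]
      odd_card2_zadd_cond_set[OF fin(1,3)] v by (simp_all add: X_def Y_def ex_def ey_def)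
  moreover have "odd_card (X \<inter> Y) \<longleftrightarrow> (odd_card (x \<inter> y) \<noteq> (ey \<and> odd_card (x \<inter> v))) \<noteq> (ex \<and> odd_card (y \<inter> v))"
    using odd_card_Int_zadd_cond_set[OF fin(1-3), of ex ey UNIV] v by (simp add: X_def Y_def)
  moreover note odd_card_Int_zadd_cond_set[OF fin(1-3), of ex ey Q, folded X_def Y_def]
    odd_le_pairs_zadd_cond_set[OF fin(2,1,3), of ey ex, folded X_def Y_def]
    odd_le_pairs_swap_ends_right[OF y] odd_le_pairs_swap_ends_left[OF x]
    odd_le_pairs_swap[OF fin(1,2)] odd_card_Int_split[OF le_infI1[OF x]]
    odd_swap_sign[OF fin(1)] odd_swap_sign[OF fin(2)] odd_swap_sign[OF finite_zadd[OF fin(1,2)]]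
    odd_card_zadd[OF fin(1,2)] zadd_Int_distrib[of x y swap_ends]
    odd_card_zadd[OF fin(4,5)]
    odd_card_Int_swap_ends[of x] odd_card_Int_swap_ends[of y]
  ultimately show ?thesis
    using F1 F2 v Q unfolding even_add ex_def[symmetric] ey_def[symmetric] v_def[symmetric] Q_def[symmetric]
    by smt
qed

lemma swap_relabel_subset: "x \<subseteq> {..<p + q} \<Longrightarrow> swap_relabel x \<subseteq> {..<p + q}"
  using p_pos by (auto simp: swap_relabel_def reverse_index_def)

lemma swap_relabel_zadd:
  assumes x: "x \<subseteq> {..<p + q}" and y: "y \<subseteq> {..<p + q}"
  shows "swap_relabel (zadd x y) = zadd (swap_relabel x) (swap_relabel y)"
proof -
  have "odd_card (zadd x y) \<longleftrightarrow> odd_card x \<noteq> odd_card y"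
    using x y by (intro odd_card_zadd) (auto intro: finite_subset)
  then have "swap_relabel (zadd x y) = reverse_index (p + q) `
      zadd (zadd x (cond_set (odd_card x) swap_ends)) (zadd y (cond_set (odd_card y) swap_ends))"
    by (simp only: swap_relabel_def zadd_cond_set_zadd)
  also have "\<dots> = zadd (swap_relabel x) (swap_relabel y)"
    unfolding swap_relabel_def
    by (intro image_zadd[OF inj_on_reverse_index] zadd_cond_set_subset x y swap_ends_subset)
  finally show ?thesis .
qed

lemma swap_relabel_swap_relabel:
  assumes "x \<subseteq> {..<p + q}"
  shows "swap_relabel (swap_relabel x) = x"
proof -
  define E where "E = cond_set (odd_card x) swap_ends"
  let ?r = "reverse_index (p + q)"
  have xE: "zadd x E \<subseteq> {..<p + q}" "E \<subseteq> {..<p + q}"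
    using zadd_cond_set_subset[OF assms swap_ends_subset] swap_ends_subset
    by (auto simp: E_def cond_set_def)
  have "?r ` swap_ends = swap_ends"
    using p_pos q_pos by (auto simp: swap_ends_def reverse_index_def)
  then have rE: "?r ` E = E"
    by (simp add: E_def cond_set_def)
  have "finite x" "finite swap_ends"
    using assms finite_subset swap_ends_subset by blast+
  then have "odd_card (swap_relabel x) \<longleftrightarrow> odd_card x"
    using odd_card_image[OF inj_on_subset[OF inj_on_reverse_index xE(1)]]
      odd_card_zadd_cond_set[of x swap_ends "odd_card x"] swap_ends_parity(1)
    by (simp add: swap_relabel_def E_def)
  then have "swap_relabel (swap_relabel x) = ?r ` zadd (?r ` zadd x E) E"
    by (simp add: swap_relabel_def E_def)
  also have "\<dots> = ?r ` ?r ` zadd (zadd x E) E"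
    using image_zadd[OF inj_on_reverse_index xE] rE by simp
  also have "\<dots> = x"
    using assms by (force simp: zadd_assoc image_image reverse_index_reverse_index)
  finally show ?thesis .
qed

theorem graded_isomorphic_swap: "graded_isomorphic p q q p"
proof (rule graded_isomorphic_by_relabelling[where \<tau> = swap_relabel and s = swap_sign])
  show "bij_betw swap_relabel (Pow {..<p + q}) (Pow {..<p + q})"
    by (rule bij_betw_byWitness[where f' = swap_relabel])
      (simp_all add: swap_relabel_swap_relabel swap_relabel_subset image_subset_iff)
qed (simp, (rule swap_relabel_zadd swap_twist; assumption)+)

end

section \<open>The isomorphism \<open>\<O>\<^sub>p\<^sub>,\<^sub>q\<^sub>+\<^sub>4 \<cong> \<O>\<^sub>p\<^sub>+\<^sub>4\<^sub>,\<^sub>q\<close>\<close>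

definition cyclic_pred :: "nat \<Rightarrow> nat \<Rightarrow> nat" where
  "cyclic_pred n k = (if k = 0 then n - 1 else k - 1)"

lemma inj_on_cyclic_pred: "inj_on (cyclic_pred n) {..<n}"
  by (auto simp: inj_on_def cyclic_pred_def split: if_splits)

lemma bij_betw_cyclic_pred: "0 < n \<Longrightarrow> bij_betw (cyclic_pred n) {..<n} {..<n}"
proof -
  assume n: "0 < n"
  have "cyclic_pred n ` {..<n} = {..<n}"
  proof
    show "cyclic_pred n ` {..<n} \<subseteq> {..<n}"
      using n by (auto simp: cyclic_pred_def)
    show "{..<n} \<subseteq> cyclic_pred n ` {..<n}"
    proof
      fix j assume j: "j \<in> {..<n}"
      show "j \<in> cyclic_pred n ` {..<n}"
      proof (cases "j = n - 1")
        case True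
        then show ?thesis
          using n by (auto simp: cyclic_pred_def intro!: image_eqI[of _ _ 0])
      next
        case False
        then show ?thesis
          using j by (auto simp: cyclic_pred_def intro!: image_eqI[of _ _ "j + 1"])
      qed
    qed
  qed
  then show ?thesis
    using inj_on_cyclic_pred by (simp add: bij_betw_def)
qed

lemma odd_le_pairs_cyclic_pred:
  assumes A: "A \<subseteq> {..<n}" and B: "B \<subseteq> {..<n}"
  shows "odd (le_pairs (cyclic_pred n ` A) (cyclic_pred n ` B)) \<longleftrightarrow>
    (odd (le_pairs A B) \<noteq> (0 \<in> A \<and> odd_card B)) \<noteq> (0 \<in> B \<and> odd_card A)"
proof -
  have fA: "finite A" and fB: "finite B"
    using A B finite_subset by auto
  let ?S1 = "{(i, j). i \<in> A \<and> j \<in> B \<and> i \<le> j}"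
  let ?S2 = "{(i, j). i \<in> A \<and> j \<in> B \<and> cyclic_pred n i \<le> cyclic_pred n j}"
  have "{(i, j). i \<in> cyclic_pred n ` A \<and> j \<in> cyclic_pred n ` B \<and> i \<le> j} =
      (\<lambda>(i, j). (cyclic_pred n i, cyclic_pred n j)) ` ?S2"
    by auto
  moreover have "inj_on (\<lambda>(i, j). (cyclic_pred n i, cyclic_pred n j)) ?S2"
    using inj_onD[OF inj_on_cyclic_pred] A B by (auto simp: inj_on_def subset_iff)
  ultimately have L: "le_pairs (cyclic_pred n ` A) (cyclic_pred n ` B) = card ?S2"
    unfolding le_pairs_def by (simp add: card_image)
  text \<open>Only the pairs involving the index \<open>0\<close>, which moves to the end, change their order.\<close>
  have "sym_diff ?S1 ?S2 = (({0} \<inter> A) \<times> (B - {0})) \<union> ((A - {0}) \<times> ({0} \<inter> B))"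
    using A B by (auto simp: cyclic_pred_def subset_iff)
  moreover have "card (({0} \<inter> A) \<times> (B - {0}) \<union> (A - {0}) \<times> ({0} \<inter> B)) =
      card ({0} \<inter> A) * card (B - {0}) + card (A - {0}) * card ({0} \<inter> B)"
    by (subst card_Un_disjoint) (use fA fB in \<open>auto simp: card_cartesian_product\<close>)
  moreover have "odd_card (sym_diff ?S1 ?S2) \<longleftrightarrow> odd_card ?S1 \<noteq> odd_card ?S2"
    using finite_le_pairs_set[OF fA fB] fA fB
    by (intro odd_card_sym_diff) (auto intro: finite_subset[of _ "A \<times> B"])
  ultimately have "odd (card ?S2) \<longleftrightarrow> odd (card ?S1) \<noteq>
      odd (card ({0} \<inter> A) * card (B - {0}) + card (A - {0}) * card ({0} \<inter> B))"
    unfolding odd_card_def by argo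
  moreover have "odd (card (X - {0})) \<longleftrightarrow> odd (card X) \<noteq> (0 \<in> X)" if "finite X" for X :: "nat set"
  proof (cases "0 \<in> X")
    case True
    then have "card X > 0"
      using that card_gt_0_iff by blast
    then show ?thesis
      using True that by (auto simp: card_Diff_singleton)
  qed simp
  moreover have "card ({0} \<inter> X) = (if 0 \<in> X then 1 else 0)" for X :: "nat set"
    by auto
  ultimately show ?thesis
    using fA fB unfolding L le_pairs_def[of A B, symmetric] odd_card_def
    by (cases "0 \<in> A"; cases "0 \<in> B") auto
qed

lemma odd_fO_cyclic_pred:
  assumes q: "1 \<le> q" and X: "X \<subseteq> {..<p + q}" and Y: "Y \<subseteq> {..<p + q}"
  shows "odd (fO p q (cyclic_pred (p + q) ` X) (cyclic_pred (p + q) ` Y)) \<longleftrightarrow>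
    (((odd_card2 X \<and> odd_card Y) \<noteq> (\<not> odd_card X \<and> odd_card (X \<inter> Y)))
      \<noteq> ((odd (le_pairs X Y) \<noteq> (0 \<in> X \<and> odd_card Y)) \<noteq> (0 \<in> Y \<and> odd_card X)))
      \<noteq> odd_card (X \<inter> Y \<inter> {1..<p + 1})"
proof -
  let ?k = "cyclic_pred (p + q)"
  have inj: "inj_on ?k A" if "A \<subseteq> {..<p + q}" for A
    using inj_on_cyclic_pred that by (rule inj_on_subset)
  have sub: "?k ` A \<subseteq> {..<p + q}" if "A \<subseteq> {..<p + q}" for A
    using that q by (auto simp: cyclic_pred_def)
  have "?k ` X \<inter> ?k ` Y = ?k ` (X \<inter> Y)"
    using inj_on_image_Int[OF inj_on_cyclic_pred X Y] by simp
  moreover have "?k ` (X \<inter> Y) \<inter> {..<p} = ?k ` (X \<inter> Y \<inter> {1..<p + 1})"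
    using X q by (force simp: cyclic_pred_def)
  ultimately show ?thesis
    using odd_fO[OF sub[OF X] sub[OF Y]] odd_le_pairs_cyclic_pred[OF X Y] X Y
    by (simp add: odd_card_image odd_card2_image inj le_infI1)
qed


context
  fixes p q :: nat
  assumes p_pos: "1 \<le> p" and q_pos: "1 \<le> q"
begin

definition shift_block :: "nat set" where
  "shift_block = {p..<p + 5}"

definition shift_set :: "nat set" where
  "shift_set = insert 0 shift_block"

definition shift_relabel :: "nat set \<Rightarrow> nat set" where
  "shift_relabel x = cyclic_pred (p + 4 + q) ` zadd x (cond_set (odd_card (x \<inter> shift_set)) shift_set)"

definition shift_sign :: "nat set \<Rightarrow> nat" where
  "shift_sign x = (if odd_card (x \<inter> shift_set) then le_pairs x shift_set else 0)
    + (card (x \<inter> shift_block) choose 2) + card (x \<inter> shift_block) * card (x - shift_block)"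

lemma shift_set_subset: "shift_set \<subseteq> {..<p + (q + 4)}"
  using q_pos by (auto simp: shift_set_def shift_block_def)

lemma finite_shift_set: "finite shift_set"
  by (simp add: shift_set_def shift_block_def)

lemma card_shift_set: "card shift_set = 6"
  using p_pos by (simp add: shift_set_def shift_block_def)

lemma shift_set_parity:
  "\<not> odd_card shift_set" "odd_card2 shift_set" "odd_card shift_block" "odd (le_pairs shift_set shift_set)"
proof -
  have "le_pairs shift_set shift_set + le_pairs shift_set shift_set = 42"
    using le_pairs_swap[OF finite_shift_set finite_shift_set] card_shift_set by simp
  then show "odd (le_pairs shift_set shift_set)"
    by presburger
qed (use card_shift_set in \<open>simp_all add: odd_card_def odd_card2_def choose_two shift_block_def\<close>)

lemma odd_card_Int_shift_set:
  "finite z \<Longrightarrow> odd_card (z \<inter> shift_set) \<longleftrightarrow> (0 \<in> z) \<noteq> odd_card (z \<inter> shift_block)"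
proof -
  assume "finite z"
  moreover have "z \<inter> shift_set = zadd (z \<inter> {0}) (z \<inter> shift_block)"
    using p_pos by (auto simp: shift_set_def shift_block_def zadd_def)
  moreover have "odd_card (z \<inter> {0}) \<longleftrightarrow> 0 \<in> z"
    by (cases "0 \<in> z") (auto simp: odd_card_def Int_insert_right)
  ultimately show ?thesis
    by (simp add: odd_card_zadd)
qed

lemma odd_card_Int_shift_window:
  assumes "finite z"
  shows "odd_card (z \<inter> {1..<p + 4 + 1}) \<longleftrightarrow>
    (odd_card (z \<inter> {..<p}) \<noteq> (0 \<in> z)) \<noteq> odd_card (z \<inter> shift_block)"
proof -
  have "z \<inter> {1..<p + 4 + 1} = zadd (z \<inter> {..<p} - {0}) (z \<inter> shift_block)"
    using p_pos by (auto simp: zadd_def shift_block_def)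
  moreover have "odd_card (z \<inter> {..<p} \<inter> {0}) \<longleftrightarrow> 0 \<in> z"
    using p_pos by (cases "0 \<in> z") (auto simp: odd_card_def Int_insert_right)
  ultimately show ?thesis
    using assms odd_card_Diff[of "z \<inter> {..<p}" "{0}"] by (simp add: odd_card_zadd)
qed

lemma odd_shift_sign:
  "finite x \<Longrightarrow> odd (shift_sign x) \<longleftrightarrow>
    ((odd_card (x \<inter> shift_set) \<and> odd (le_pairs x shift_set)) \<noteq> odd_card2 (x \<inter> shift_block))
      \<noteq> (odd_card (x \<inter> shift_block) \<and> (odd_card x \<noteq> odd_card (x \<inter> shift_block)))"
  using odd_card_Diff[of x shift_block] by (auto simp: shift_sign_def odd_card_def odd_card2_def)

lemma odd_shift_sign_zadd:
  assumes "finite x" "finite y"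
  shows "odd (shift_sign (zadd x y)) \<longleftrightarrow>
    (((odd_card (x \<inter> shift_set) \<noteq> odd_card (y \<inter> shift_set))
        \<and> (odd (le_pairs x shift_set) \<noteq> odd (le_pairs y shift_set)))
      \<noteq> (((odd_card2 (x \<inter> shift_block) \<noteq> odd_card2 (y \<inter> shift_block))
          \<noteq> (odd_card (x \<inter> shift_block) \<and> odd_card (y \<inter> shift_block))) \<noteq> odd_card (x \<inter> y \<inter> shift_block)))
      \<noteq> ((odd_card (x \<inter> shift_block) \<noteq> odd_card (y \<inter> shift_block))
          \<and> ((odd_card x \<noteq> odd_card y) \<noteq> (odd_card (x \<inter> shift_block) \<noteq> odd_card (y \<inter> shift_block))))"
proof -
  have fin: "finite (x \<inter> C)" "finite (y \<inter> C)" for C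
    using assms by auto
  have "x \<inter> shift_block \<inter> (y \<inter> shift_block) = x \<inter> y \<inter> shift_block"
    by auto
  then show ?thesis
    using odd_shift_sign[OF finite_zadd[OF assms]] odd_le_pairs_zadd_left[OF assms finite_shift_set]
      odd_card2_zadd[OF fin] odd_card_zadd[OF fin] odd_card_zadd[OF assms]
    by (simp add: zadd_Int_distrib)
qed


lemma shift_twist:
  assumes x: "x \<subseteq> {..<p + (q + 4)}" and y: "y \<subseteq> {..<p + (q + 4)}"
  shows "even (fO (p + 4) q (shift_relabel x) (shift_relabel y) + fO p (q + 4) x y
    + shift_sign x + shift_sign y + shift_sign (zadd x y))"
proof -
  define W R I where "W = shift_set" and "R = shift_block" and "I = {1..<p + 4 + 1}"
  define ex ey where "ex = odd_card (x \<inter> W)" and "ey = odd_card (y \<inter> W)"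
  define X Y where "X = zadd x (cond_set ex W)" and "Y = zadd y (cond_set ey W)"
  have fin: "finite x" "finite y" "finite W"
    using x y finite_subset finite_shift_set by (auto simp: W_def)
  have W: "\<not> odd_card W" "odd_card2 W" "odd_card R" "odd (le_pairs W W)" "I \<inter> W = R"
    "x \<inter> I \<inter> W = x \<inter> R" "y \<inter> I \<inter> W = y \<inter> R"
    using shift_set_parity p_pos by (auto simp: W_def R_def I_def shift_set_def shift_block_def)
  have "X \<subseteq> {..<p + 4 + q}" "Y \<subseteq> {..<p + 4 + q}"
    using zadd_cond_set_subset[OF x shift_set_subset] zadd_cond_set_subset[OF y shift_set_subset]
    by (simp_all add: X_def Y_def W_def ac_simps)
  then have F1: "odd (fO (p + 4) q (shift_relabel x) (shift_relabel y)) \<longleftrightarrow>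
      (((odd_card2 X \<and> odd_card Y) \<noteq> (\<not> odd_card X \<and> odd_card (X \<inter> Y)))
        \<noteq> ((odd (le_pairs X Y) \<noteq> (0 \<in> X \<and> odd_card Y)) \<noteq> (0 \<in> Y \<and> odd_card X)))
        \<noteq> odd_card (X \<inter> Y \<inter> I)"
    unfolding shift_relabel_def X_def Y_def ex_def ey_def W_def I_def
    using q_pos by (intro odd_fO_cyclic_pred)
  have I_parity: "odd_card (x \<inter> y \<inter> I) \<longleftrightarrow>
      (odd_card (x \<inter> y \<inter> {..<p}) \<noteq> (0 \<in> x \<and> 0 \<in> y)) \<noteq> odd_card (x \<inter> y \<inter> R)"
    using odd_card_Int_shift_window[of "x \<inter> y"] fin by (simp add: I_def R_def)
  have "odd_card X \<longleftrightarrow> odd_card x" "odd_card Y \<longleftrightarrow> odd_card y" "odd_card2 X \<longleftrightarrow> odd_card2 x"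
    "odd_card (X \<inter> Y) \<longleftrightarrow> odd_card (x \<inter> y)"
    using odd_card_zadd_cond_set[OF fin(1,3)] odd_card_zadd_cond_set[OF fin(2,3)]
      odd_card2_zadd_cond_set[OF fin(1,3), of ex] odd_card_Int_zadd_cond_set[OF fin, of ex ey UNIV] W
    by (auto simp: X_def Y_def ex_def ey_def)
  moreover have "0 \<in> X \<longleftrightarrow> (0 \<in> x) \<noteq> ex" "0 \<in> Y \<longleftrightarrow> (0 \<in> y) \<noteq> ey"
    by (auto simp: X_def Y_def zadd_def cond_set_def W_def shift_set_def)
  moreover have "odd (le_pairs W y) \<longleftrightarrow> odd (le_pairs y W) \<noteq> ey"
    using odd_le_pairs_swap[OF fin(2,3)] W(1) by (simp add: ey_def)
  moreover have "odd_card (X \<inter> Y \<inter> I) \<longleftrightarrow>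
      ((odd_card (x \<inter> y \<inter> I) \<noteq> (ey \<and> odd_card (x \<inter> R))) \<noteq> (ex \<and> odd_card (y \<inter> R))) \<noteq> (ex \<and> ey)"
    using odd_card_Int_zadd_cond_set[OF fin, of ex ey I] W(3,5-7) by (simp add: X_def Y_def)
  moreover note odd_le_pairs_zadd_cond_set[OF fin, of ex ey, folded X_def Y_def]
    odd_fO[OF x y] odd_shift_sign[OF fin(1)] odd_shift_sign[OF fin(2)] odd_shift_sign_zadd[OF fin(1,2)]
    odd_card_Int_shift_set[OF fin(1)] odd_card_Int_shift_set[OF fin(2)]
  ultimately show ?thesis
    using F1 I_parity W(1-4) unfolding even_add ex_def[symmetric] ey_def[symmetric] W_def[symmetric] R_def[symmetric]
    by argo
qed

lemma shift_relabel_zadd: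
  assumes x: "x \<subseteq> {..<p + (q + 4)}" and y: "y \<subseteq> {..<p + (q + 4)}"
  shows "shift_relabel (zadd x y) = zadd (shift_relabel x) (shift_relabel y)"
proof -
  have "odd_card (zadd x y \<inter> shift_set) \<longleftrightarrow> odd_card (x \<inter> shift_set) \<noteq> odd_card (y \<inter> shift_set)"
    unfolding zadd_Int_distrib using x y by (intro odd_card_zadd) (auto intro: finite_subset)
  then have "shift_relabel (zadd x y) = cyclic_pred (p + 4 + q) `
      zadd (zadd x (cond_set (odd_card (x \<inter> shift_set)) shift_set))
        (zadd y (cond_set (odd_card (y \<inter> shift_set)) shift_set))"
    by (simp only: shift_relabel_def zadd_cond_set_zadd)
  also have "\<dots> = zadd (shift_relabel x) (shift_relabel y)"
    unfolding shift_relabel_def using x y shift_set_subset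
    by (intro image_zadd[OF inj_on_cyclic_pred] zadd_cond_set_subset) (simp_all add: ac_simps)
  finally show ?thesis .
qed

lemma bij_shift_relabel: "bij_betw shift_relabel (Pow {..<p + (q + 4)}) (Pow {..<p + (q + 4)})"
proof -
  let ?U = "{..<p + (q + 4)}"
  define t where "t x = zadd x (cond_set (odd_card (x \<inter> shift_set)) shift_set)" for x
  have "odd_card (t x \<inter> shift_set) \<longleftrightarrow> odd_card (x \<inter> shift_set)" if "x \<subseteq> ?U" for x
  proof -
    have "t x \<inter> shift_set = zadd (x \<inter> shift_set) (cond_set (odd_card (x \<inter> shift_set)) shift_set)"
      by (auto simp: t_def zadd_def cond_set_def)
    then show ?thesis
      using odd_card_zadd_cond_set[of "x \<inter> shift_set" shift_set] finite_shift_set shift_set_parity(1)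
      by simp
  qed
  then have "t (t x) = x" if "x \<subseteq> ?U" for x
    using that by (simp add: t_def zadd_assoc)
  then have "bij_betw t (Pow ?U) (Pow ?U)"
    using zadd_cond_set_subset[OF _ shift_set_subset]
    by (intro bij_betw_byWitness[where f' = t]) (simp_all add: t_def image_subset_iff shift_set_subset)
  moreover have "bij_betw (image (cyclic_pred (p + 4 + q))) (Pow ?U) (Pow ?U)"
    using bij_betw_Pow[OF bij_betw_cyclic_pred[of "p + 4 + q"]] by (simp add: ac_simps)
  ultimately show ?thesis
    using bij_betw_trans unfolding shift_relabel_def t_def[symmetric] comp_def[symmetric] by blast
qed

theorem graded_isomorphic_shift: "graded_isomorphic p (q + 4) (p + 4) q"
  by (rule graded_isomorphic_by_relabelling[where \<tau> = shift_relabel and s = shift_sign])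
    (simp, rule bij_shift_relabel, (rule shift_relabel_zadd shift_twist; assumption)+)

end

section \<open>The signs of the squares of the basis elements\<close>

lemma omult_ubasis:
  assumes "x \<subseteq> {..<p + q}" "y \<subseteq> {..<p + q}"
  shows "omult p q (\<lambda>z. c * ubasis x z) (\<lambda>z. d * ubasis y z) =
    (\<lambda>z. (c * d * (-1) ^ fO p q x y) * ubasis (zadd x y) z)"
proof
  fix z
  have "omult p q (\<lambda>z. c * ubasis x z) (\<lambda>z. d * ubasis y z) z =
      (\<Sum>x'\<in>Pow {..<p + q}. if x' = x then (\<Sum>y'\<in>Pow {..<p + q}. if y' = y then
        (if zadd x y = z then (-1) ^ fO p q x y * c * d else 0) else 0) else 0)"
    unfolding omult_def
  proof (rule sum.cong[OF refl])
    fix x' assume "x' \<in> Pow {..<p + q}"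
    show "(\<Sum>y'\<in>Pow {..<p + q}. if zadd x' y' = z
          then (-1) ^ fO p q x' y' * (c * ubasis x x') * (d * ubasis y y') else 0) =
        (if x' = x then (\<Sum>y'\<in>Pow {..<p + q}. if y' = y then
          (if zadd x y = z then (-1) ^ fO p q x y * c * d else 0) else 0) else 0)"
    proof (cases "x' = x")
      case True
      show ?thesis
        unfolding True by (subst if_P[OF refl], rule sum.cong[OF refl]) (auto simp: ubasis_def)
    next
      case False
      then have "ubasis x x' = 0"
        by (simp add: ubasis_def)
      then show ?thesis
        using False by (simp only: if_False) (rule sum.neutral, simp)
    qed
  qed
  also have "\<dots> = (if zadd x y = z then (-1) ^ fO p q x y * c * d else 0)"
    using assms by simp
  finally show "omult p q (\<lambda>z. c * ubasis x z) (\<lambda>z. d * ubasis y z) z =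
      (c * d * (-1) ^ fO p q x y) * ubasis (zadd x y) z"
    by (simp add: ubasis_def)
qed

lemma fO_empty [simp]: "fO p q {} {} = 0"
  by (simp add: fO_def bit_def Let_def)

lemma ubasis_carrier: "x \<subseteq> {..<n} \<Longrightarrow> ubasis x \<in> alg_carrier n"
  by (auto simp: alg_carrier_def ubasis_def)

definition square_sign_sum :: "nat \<Rightarrow> nat \<Rightarrow> complex" where
  "square_sign_sum p q = (\<Sum>x\<in>Pow {..<p + q}. (-1) ^ fO p q x x)"

context
  fixes p q p' q' :: nat and \<phi> :: "(nat set \<Rightarrow> real) \<Rightarrow> nat set \<Rightarrow> real"
  assumes iso: "graded_iso p q p' q' \<phi>"
begin

lemma graded_iso_dim: "p' + q' = p + q"
  using iso by (simp add: graded_iso_def)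

lemma graded_iso_inj: "inj_on \<phi> (alg_carrier (p + q))"
  using iso unfolding graded_iso_def bij_betw_def by blast

lemma graded_iso_scale: "a \<in> alg_carrier (p + q) \<Longrightarrow> \<phi> (\<lambda>z. c * a z) = (\<lambda>z. c * \<phi> a z)"
  using iso unfolding graded_iso_def by blast

lemma graded_iso_omult:
  "a \<in> alg_carrier (p + q) \<Longrightarrow> b \<in> alg_carrier (p + q) \<Longrightarrow> \<phi> (omult p q a b) = omult p' q' (\<phi> a) (\<phi> b)"
  using iso unfolding graded_iso_def by blast

lemma graded_iso_ubasis:
  assumes x: "x \<subseteq> {..<p + q}"
  obtains c y where "c \<noteq> 0" "y \<subseteq> {..<p + q}" "\<phi> (ubasis x) = (\<lambda>z. c * ubasis y z)"
proof -
  have "homogeneous (p + q) (ubasis x)"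
    unfolding homogeneous_def using x by (intro exI[of _ 1] exI[of _ x]) simp
  then obtain c y where y: "y \<subseteq> {..<p + q}" and c: "\<phi> (ubasis x) = (\<lambda>z. c * ubasis y z)"
    using iso ubasis_carrier[OF x] graded_iso_dim unfolding graded_iso_def homogeneous_def by metis
  have zero: "(\<lambda>z. 0) \<in> alg_carrier (p + q)"
    by (simp add: alg_carrier_def)
  have "c \<noteq> 0"
  proof
    assume "c = 0"
    then have "\<phi> (ubasis x) = \<phi> (\<lambda>z. 0 * ubasis x z)"
      using c graded_iso_scale[OF ubasis_carrier[OF x], of 0] by simp
    then have "ubasis x = (\<lambda>z. 0)"
      using inj_onD[OF graded_iso_inj _ ubasis_carrier[OF x]] zero by simp
    then show False
      by (metis ubasis_def zero_neq_one)
  qed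
  then show ?thesis
    using that y c by blast
qed

lemma graded_iso_ubasis_empty:
  assumes y: "y \<subseteq> {..<p + q}" and c: "\<phi> (ubasis {}) = (\<lambda>z. c * ubasis y z)" "c \<noteq> 0"
  shows "y = {}" "c = 1"
proof -
  have y': "y \<subseteq> {..<p' + q'}"
    using y graded_iso_dim by simp
  have "omult p q (ubasis {}) (ubasis {}) = ubasis {}"
    using omult_ubasis[of "{}" p q "{}" 1 1] by simp
  then have "(\<lambda>z. c * ubasis y z) = omult p' q' (\<lambda>z. c * ubasis y z) (\<lambda>z. c * ubasis y z)"
    using graded_iso_omult[OF ubasis_carrier ubasis_carrier, of "{}" "{}"] c(1) by simp
  also have "\<dots> = (\<lambda>z. (c * c * (-1) ^ fO p' q' y y) * ubasis {} z)"
    using omult_ubasis[OF y' y'] by simp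
  finally have E: "(\<lambda>z. c * ubasis y z) = (\<lambda>z. (c * c * (-1) ^ fO p' q' y y) * ubasis {} z)" .
  show "y = {}"
    using fun_cong[OF E, of y] c(2) by (auto simp: ubasis_def split: if_splits)
  then show "c = 1"
    using fun_cong[OF E, of "{}"] c(2) by (simp add: ubasis_def)
qed

lemma graded_iso_ubasis_empty_eq: "\<phi> (ubasis {}) = ubasis {}"
proof -
  obtain c y where c: "c \<noteq> 0" "y \<subseteq> {..<p + q}" "\<phi> (ubasis {}) = (\<lambda>z. c * ubasis y z)"
    using graded_iso_ubasis[of "{}"] by blast
  then have "y = {}" "c = 1"
    using graded_iso_ubasis_empty[OF c(2,3,1)] by simp_all
  then show ?thesis
    using c(3) by simp
qed

text \<open>The scalar \<open>c\<close> by which \<open>u\<^sub>x\<close> is multiplied enters \<open>u\<^sub>x\<^sup>2\<close> as the positive factor \<open>c\<^sup>2\<close>.\<close>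
lemma graded_iso_square_sign:
  assumes x: "x \<subseteq> {..<p + q}" and y: "y \<subseteq> {..<p + q}"
    and c: "\<phi> (ubasis x) = (\<lambda>z. c * ubasis y z)" "c \<noteq> 0"
  shows "even (fO p' q' y y) \<longleftrightarrow> even (fO p q x x)"
proof -
  have y': "y \<subseteq> {..<p' + q'}"
    using y graded_iso_dim by simp
  have "omult p q (ubasis x) (ubasis x) = (\<lambda>z. (-1) ^ fO p q x x * ubasis {} z)"
    using omult_ubasis[OF x x, of 1 1] by simp
  then have "\<phi> (omult p q (ubasis x) (ubasis x)) = (\<lambda>z. (-1) ^ fO p q x x * ubasis {} z)"
    using graded_iso_scale[OF ubasis_carrier, of "{}"] graded_iso_ubasis_empty_eq by simp
  moreover have "\<phi> (omult p q (ubasis x) (ubasis x)) = (\<lambda>z. (c * c * (-1) ^ fO p' q' y y) * ubasis {} z)"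
    using graded_iso_omult[OF ubasis_carrier[OF x] ubasis_carrier[OF x]] c(1) omult_ubasis[OF y' y']
    by simp
  ultimately have "(-1::real) ^ fO p q x x = c * c * (-1) ^ fO p' q' y y"
    by (metis ubasis_def mult.right_neutral)
  moreover have "c * c > 0"
    using c(2) not_real_square_gt_zero by blast
  ultimately show ?thesis
    by (cases "even (fO p q x x)"; cases "even (fO p' q' y y)") (auto simp: minus_one_power_iff)
qed

theorem graded_iso_square_sign_sum: "square_sign_sum p q = square_sign_sum p' q'"
proof -
  let ?U = "Pow {..<p + q}"
  have "\<forall>x\<in>?U. \<exists>y c. c \<noteq> 0 \<and> y \<subseteq> {..<p + q} \<and> \<phi> (ubasis x) = (\<lambda>z. c * ubasis y z)"
    using graded_iso_ubasis by (metis PowD)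
  then obtain \<sigma> cf where \<sigma>: "\<And>x. x \<in> ?U \<Longrightarrow>
      cf x \<noteq> 0 \<and> \<sigma> x \<subseteq> {..<p + q} \<and> \<phi> (ubasis x) = (\<lambda>z. cf x * ubasis (\<sigma> x) z)"
    by metis
  have "inj_on \<sigma> ?U"
  proof (rule inj_onI)
    fix x y assume x: "x \<in> ?U" and y: "y \<in> ?U" and "\<sigma> x = \<sigma> y"
    then have "\<phi> (\<lambda>z. cf y * ubasis x z) = \<phi> (\<lambda>z. cf x * ubasis y z)"
      using graded_iso_scale[OF ubasis_carrier, of x "cf y"] graded_iso_scale[OF ubasis_carrier, of y "cf x"]
        \<sigma>[OF x] \<sigma>[OF y] by (simp add: mult_ac)
    moreover have "(\<lambda>z. cf y * ubasis x z) \<in> alg_carrier (p + q)" "(\<lambda>z. cf x * ubasis y z) \<in> alg_carrier (p + q)"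
      using x y by (auto simp: alg_carrier_def ubasis_def)
    ultimately have "(\<lambda>z. cf y * ubasis x z) = (\<lambda>z. cf x * ubasis y z)"
      using graded_iso_inj by (simp add: inj_on_eq_iff)
    then have "cf y * ubasis x x = cf x * ubasis y x"
      by (rule fun_cong)
    then show "x = y"
      using conjunct1[OF \<sigma>[OF y]] by (cases "x = y") (simp_all add: ubasis_def)
  qed
  moreover have "\<sigma> ` ?U \<subseteq> ?U"
    using \<sigma> by blast
  ultimately have "bij_betw \<sigma> ?U ?U"
    by (simp add: bij_betw_def endo_inj_surj)
  then have "square_sign_sum p' q' = (\<Sum>x\<in>?U. (-1) ^ fO p' q' (\<sigma> x) (\<sigma> x))"
    unfolding square_sign_sum_def graded_iso_dim by (rule sum.reindex_bij_betw[symmetric])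
  also have "\<dots> = square_sign_sum p q"
    unfolding square_sign_sum_def using \<sigma> graded_iso_square_sign
    by (intro sum.cong refl) (simp add: minus_one_power_iff)
  finally show ?thesis ..
qed

end

lemma graded_isomorphic_square_sign_sum:
  "graded_isomorphic p q p' q' \<Longrightarrow> square_sign_sum p q = square_sign_sum p' q'"
  unfolding graded_isomorphic_def by (elim exE) (rule graded_iso_square_sign_sum)

section \<open>Evaluation of the invariant\<close>

lemma odd_choose_two_iff: "odd (k choose 2) \<longleftrightarrow> k mod 4 = 2 \<or> k mod 4 = 3"
proof (induction k)
  case (Suc k)
  have "odd (Suc k choose 2) \<longleftrightarrow> odd (k choose 2) \<noteq> odd k"
    by (simp add: choose_two_Suc)
  then show ?case
    unfolding Suc.IH by presburger
qed (simp add: numeral_2_eq_2)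

lemma odd_fO_diag:
  assumes x: "x \<subseteq> {..<p + q}"
  shows "odd (fO p q x x) \<longleftrightarrow> (card x mod 4 = 2) \<noteq> odd_card (x \<inter> {p..<p + q})"
proof -
  have "card x mod 4 = 2 \<longleftrightarrow> odd_card2 x \<and> \<not> odd_card x"
    unfolding odd_card2_def odd_card_def odd_choose_two_iff by presburger
  then show ?thesis
    using odd_fO[OF x x] odd_card_Int_split[OF x] odd_le_pairs_self[OF finite_subset[OF x]]
    by (auto simp: odd_card_def)
qed

text \<open>Writing the sign of \<open>k \<equiv> 2 (mod 4)\<close> as a combination of the characters \<open>k \<mapsto> \<zeta>\<^sup>k\<close> of \<open>\<int>/4\<close>
  turns the invariant into four binomial sums.\<close>
definition mod4_sign :: "nat \<Rightarrow> complex" where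
  "mod4_sign k = (1 + \<i> ^ k - (-1) ^ k + (-\<i>) ^ k) / 2"

lemma power_mod4:
  assumes "(z::complex) ^ 4 = 1"
  shows "z ^ k = z ^ (k mod 4)"
proof -
  have "z ^ k = (z ^ 4) ^ (k div 4) * z ^ (k mod 4)"
    unfolding power_mult[symmetric] power_add[symmetric] by simp
  then show ?thesis
    using assms by simp
qed

lemma mod4_sign_eq: "mod4_sign k = (if k mod 4 = 2 then -1 else 1)"
proof -
  have "\<i> ^ 4 = 1" "(-\<i>) ^ 4 = 1" "(-1::complex) ^ 4 = 1"
    by (simp_all add: power4_eq_xxxx)
  moreover have "k mod 4 = 0 \<or> k mod 4 = 1 \<or> k mod 4 = 2 \<or> k mod 4 = 3"
    by arith
  ultimately show ?thesis
    unfolding mod4_sign_def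
    by (auto simp: power_mod4[of \<i> k] power_mod4[of "-\<i>" k] power_mod4[of "-1" k]
        numeral_3_eq_3 numeral_2_eq_2 complex_eq_iff)
qed

lemma sum_Pow_power_card:
  fixes z :: complex
  shows "(\<Sum>x\<in>Pow {..<p + q}. z ^ card x * (-1) ^ card (x \<inter> {p..<p + q})) = (1 + z) ^ p * (1 - z) ^ q"
proof -
  define Q where "Q = {p..<p + q}"
  define f where "f i = (if i \<in> Q then -z else z)" for i
  have "(\<Prod>i\<in>x. f i) = z ^ card x * (-1) ^ card (x \<inter> Q)" if "x \<subseteq> {..<p + q}" for x
  proof -
    have fx: "finite x"
      using that finite_subset by blast
    have "(\<Prod>i\<in>x. f i) = (-z) ^ card (x \<inter> Q) * z ^ card (x - Q)"
      unfolding f_def by (simp add: prod.If_cases fx Diff_eq Int_def)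
    also have "\<dots> = z ^ (card (x \<inter> Q) + card (x - Q)) * (-1) ^ card (x \<inter> Q)"
      by (simp add: power_add power_mult_distrib[symmetric] algebra_simps)
    finally show ?thesis
      using card_Int_Diff[OF fx, of Q] by simp
  qed
  then have "(\<Sum>x\<in>Pow {..<p + q}. z ^ card x * (-1) ^ card (x \<inter> Q)) = (\<Prod>i<p + q. f i + 1)"
    by (simp add: prod_add)
  also have "\<dots> = (\<Prod>i<p + q. if i \<in> Q then 1 - z else 1 + z)"
    by (intro prod.cong refl) (simp add: f_def)
  also have "\<dots> = (1 - z) ^ card ({..<p + q} \<inter> Q) * (1 + z) ^ card ({..<p + q} - Q)"
    by (simp add: prod.If_cases Diff_eq Int_def)
  also have "\<dots> = (1 + z) ^ p * (1 - z) ^ q"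
  proof -
    have "{..<p + q} \<inter> Q = Q" "{..<p + q} - Q = {..<p}"
      by (auto simp: Q_def)
    then show ?thesis
      by (simp add: Q_def mult.commute)
  qed
  finally show ?thesis
    by (simp add: Q_def)
qed

theorem square_sign_sum_eq:
  "square_sign_sum p q = (2 ^ p * 0 ^ q + (1 + \<i>) ^ p * (1 - \<i>) ^ q - 0 ^ p * 2 ^ q + (1 - \<i>) ^ p * (1 + \<i>) ^ q) / 2"
proof -
  let ?U = "Pow {..<p + q}" and ?s = "\<lambda>x. (-1::complex) ^ card (x \<inter> {p..<p + q})"
  have "square_sign_sum p q = (\<Sum>x\<in>?U. mod4_sign (card x) * ?s x)"
    unfolding square_sign_sum_def mod4_sign_eq using odd_fO_diag
    by (intro sum.cong refl) (auto simp: minus_one_power_iff odd_card_def)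
  also have "\<dots> = ((\<Sum>x\<in>?U. 1 ^ card x * ?s x) + (\<Sum>x\<in>?U. \<i> ^ card x * ?s x)
      - (\<Sum>x\<in>?U. (-1) ^ card x * ?s x) + (\<Sum>x\<in>?U. (-\<i>) ^ card x * ?s x)) / 2"
    unfolding mod4_sign_def
    by (simp add: sum_divide_distrib[symmetric] sum.distrib sum_subtractf algebra_simps)
  also have "\<dots> = ((1 + 1) ^ p * (1 - 1) ^ q + (1 + \<i>) ^ p * (1 - \<i>) ^ q
      - (1 + -1) ^ p * (1 - -1) ^ q + (1 + -\<i>) ^ p * (1 - -\<i>) ^ q) / 2"
    unfolding sum_Pow_power_card ..
  finally show ?thesis
    by simp
qed


lemma square_sign_sum_mixed:
  assumes "1 \<le> p" "1 \<le> q"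
  shows "square_sign_sum p q = (1 + \<i>) ^ (p + q) * ((-\<i>) ^ p + (-\<i>) ^ q) / 2"
proof -
  have "1 - \<i> = (-\<i>) * (1 + \<i>)"
    by (simp add: algebra_simps)
  then have "(1 - \<i>) ^ k = (-\<i>) ^ k * (1 + \<i>) ^ k" for k
    by (metis power_mult_distrib)
  then show ?thesis
    using assms by (simp add: square_sign_sum_eq power_0_left power_add algebra_simps)
qed

lemma neg_i_power_sum_eq:
  fixes a b a' b' :: nat
  assumes "a < 4" "b < 4" "a' < 4" "b' < 4" "(a + b) mod 4 = (a' + b') mod 4"
    and "(-\<i>) ^ a + (-\<i>) ^ b = (-\<i>) ^ a' + (-\<i>) ^ b'"
  shows "a' = a \<or> a' = b"
proof -
  have cases: "k < 4 \<Longrightarrow> k = 0 \<or> k = 1 \<or> k = 2 \<or> k = 3" for k :: nat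
    by arith
  have "(-\<i>) ^ 2 = -1" "(-\<i>) ^ 3 = \<i>"
    by (simp_all add: numeral_3_eq_3 numeral_2_eq_2)
  then show ?thesis
    using cases[OF assms(1)] cases[OF assms(2)] cases[OF assms(3)] cases[OF assms(4)] assms(5,6)
    by (elim disjE) (simp_all add: complex_eq_iff)
qed

theorem square_sign_sum_residues:
  assumes "1 \<le> p" "1 \<le> q" "1 \<le> p'" "1 \<le> q'" "p + q = p' + q'"
    and "square_sign_sum p q = square_sign_sum p' q'"
  shows "p' mod 4 = p mod 4 \<or> p' mod 4 = q mod 4"
proof -
  have "1 + \<i> \<noteq> 0"
    by (simp add: complex_eq_iff)
  then have "(-\<i>) ^ p + (-\<i>) ^ q = (-\<i>) ^ p' + (-\<i>) ^ q'"
    using assms square_sign_sum_mixed[of p q] square_sign_sum_mixed[of p' q'] by simp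
  moreover have "(-\<i>) ^ k = (-\<i>) ^ (k mod 4)" for k
    by (rule power_mod4) (simp add: power4_eq_xxxx)
  ultimately have "(-\<i>) ^ (p mod 4) + (-\<i>) ^ (q mod 4) = (-\<i>) ^ (p' mod 4) + (-\<i>) ^ (q' mod 4)"
    by metis
  moreover have "(p mod 4 + q mod 4) mod 4 = (p' mod 4 + q' mod 4) mod 4"
    using assms(5) by (metis mod_add_eq)
  ultimately show ?thesis
    by (intro neg_i_power_sum_eq) simp_all
qed

lemma sqrt2_power_bound:
  assumes "5 \<le> n"
  shows "4 * sqrt 2 ^ n < (2::real) ^ n"
proof -
  have "sqrt 2 ^ 5 \<le> sqrt (2::real) ^ n"
    using assms by (intro power_increasing) simp_all
  moreover have "sqrt (2::real) ^ 5 = 4 * sqrt 2"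
    by (simp add: power_def numeral_eq_Suc algebra_simps)
  moreover have "4 < 4 * sqrt (2::real)"
    by simp
  ultimately have "4 < sqrt (2::real) ^ n"
    by linarith
  then have "4 * sqrt 2 ^ n < sqrt 2 ^ n * sqrt (2::real) ^ n"
    by (simp add: mult_strict_right_mono)
  then show ?thesis
    by (simp flip: power_mult_distrib)
qed

lemma square_sign_sum_ends: "1 \<le> n \<Longrightarrow> square_sign_sum n 0 \<noteq> square_sign_sum 0 n"
  by (simp add: square_sign_sum_eq power_0_left divide_cancel_right)

text \<open>For \<open>n \<ge> 5\<close> the value \<open>\<plusminus>2\<^sup>n/2\<close> contributed by the summand \<open>2\<^sup>n\<close> of \<open>\<O>\<^sub>n\<^sub>,\<^sub>0\<close> or \<open>\<O>\<^sub>0\<^sub>,\<^sub>n\<close>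
  dominates the remaining terms, all of modulus \<open>\<surd>2\<^sup>n\<close>.\<close>
theorem square_sign_sum_extreme:
  assumes n: "5 \<le> n" and pq: "1 \<le> p" "1 \<le> q" "p + q = n"
  shows "square_sign_sum n 0 \<noteq> square_sign_sum p q" "square_sign_sum 0 n \<noteq> square_sign_sum p q"
proof -
  define A B C D where "A = (1 + \<i>) ^ p * (1 - \<i>) ^ q" and "B = (1 - \<i>) ^ p * (1 + \<i>) ^ q"
    and "C = (1 + \<i>) ^ n" and "D = (1 - \<i>) ^ n"
  have S: "square_sign_sum p q = (A + B) / 2" "square_sign_sum n 0 = (2 ^ n + C + D) / 2"
    "square_sign_sum 0 n = (- (2 ^ n) + C + D) / 2"
    using pq n by (simp_all add: square_sign_sum_eq A_def B_def C_def D_def power_0_left)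
  have "cmod (1 + \<i>) = sqrt 2" "cmod (1 - \<i>) = sqrt 2"
    by (simp_all add: cmod_def)
  then have "cmod A = sqrt 2 ^ n" "cmod B = sqrt 2 ^ n" "cmod C = sqrt 2 ^ n" "cmod D = sqrt 2 ^ n"
    using pq(3)[symmetric] by (simp_all add: A_def B_def C_def D_def norm_mult norm_power power_add)
  then have "cmod (A + B - C - D) \<le> 4 * sqrt 2 ^ n"
    using norm_triangle_ineq4[of "A + B - C" D] norm_triangle_ineq4[of "A + B" C] norm_triangle_ineq[of A B]
    by linarith
  then have "cmod (A + B - C - D) < cmod ((2::complex) ^ n)"
    using sqrt2_power_bound[OF n] by (simp add: norm_power)
  then have "A + B - C - D \<noteq> 2 ^ n" "A + B - C - D \<noteq> - (2 ^ n)"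
    by auto
  then have "2 ^ n + C + D \<noteq> A + B" "- (2 ^ n) + C + D \<noteq> A + B"
    by (auto simp: algebra_simps)
  then show "square_sign_sum n 0 \<noteq> square_sign_sum p q" "square_sign_sum 0 n \<noteq> square_sign_sum p q"
    unfolding S divide_cancel_right by simp_all
qed

section \<open>Reachability by the moves (i) and (ii)\<close>

lemma symp_oct_move: "symp oct_move"
  by (auto simp: symp_def oct_move_def)

lemma oct_move_to_least_residue:
  "1 \<le> p \<Longrightarrow> 1 \<le> q \<Longrightarrow> oct_move\<^sup>*\<^sup>* (p, q) ((p - 1) mod 4 + 1, p + q - ((p - 1) mod 4 + 1))"
proof (induction p arbitrary: q rule: less_induct)
  case (less p)
  show ?case
  proof (cases "p \<le> 4")
    case True
    then show ?thesis
      using less.prems by simp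
  next
    case False
    then have "oct_move (p, q) (p - 4, q + 4)"
      using less.prems by (simp add: oct_move_def)
    moreover have "p - 1 = (p - 4 - 1) + 4" "p - 4 + (q + 4) = p + q"
      using False by simp_all
    then have "(p - 4 - 1) mod 4 = (p - 1) mod 4" "p - 4 + (q + 4) = p + q"
      by (metis mod_add_self2, simp)
    ultimately show ?thesis
      using less.IH[of "p - 4" "q + 4"] False by (simp add: converse_rtranclp_into_rtranclp)
  qed
qed

lemma pred_mod4: "1 \<le> (k::nat) \<Longrightarrow> (k - 1) mod 4 = (k mod 4 + 3) mod 4"
proof -
  assume "1 \<le> k"
  then have "k + 3 = (k - 1) + 4"
    by simp
  then have "(k - 1) mod 4 = (k + 3) mod 4"
    by (metis mod_add_self2)
  then show ?thesis
    by (simp add: mod_add_left_eq)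
qed

theorem oct_move_reachable:
  assumes "1 \<le> p" "1 \<le> q" "1 \<le> p'" "1 \<le> q'" "p + q = p' + q'"
    and "p' mod 4 = p mod 4 \<or> p' mod 4 = q mod 4"
  shows "oct_move\<^sup>*\<^sup>* (p, q) (p', q')"
proof -
  have same: "oct_move\<^sup>*\<^sup>* (a, b) (p', q')" if "1 \<le> a" "1 \<le> b" "a + b = p' + q'" "p' mod 4 = a mod 4"
    for a b
  proof -
    have "(a - 1) mod 4 = (p' - 1) mod 4"
      using pred_mod4[OF that(1)] pred_mod4[OF assms(3)] that(4) by simp
    then have "oct_move\<^sup>*\<^sup>* (p', q') ((a - 1) mod 4 + 1, a + b - ((a - 1) mod 4 + 1))"
      using oct_move_to_least_residue[of p' q'] assms(3,4) that(3) by simp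
    then have "oct_move\<^sup>*\<^sup>* ((a - 1) mod 4 + 1, a + b - ((a - 1) mod 4 + 1)) (p', q')"
      by (rule sympD[OF symp_rtranclp[OF symp_oct_move]])
    then show ?thesis
      by (rule rtranclp_trans[OF oct_move_to_least_residue[OF that(1,2)]])
  qed
  show ?thesis
    using assms(6)
  proof
    assume "p' mod 4 = q mod 4"
    moreover have "oct_move (p, q) (q, p)"
      using assms by (simp add: oct_move_def)
    ultimately show ?thesis
      using same[of q p] assms by (simp add: converse_rtranclp_into_rtranclp)
  qed (use same assms in blast)
qed

theorem mainTheorem1:
  shows
   "(\<forall>p q. 1 \<le> p \<longrightarrow> 1 \<le> q \<longrightarrow> 3 \<le> p + q \<longrightarrow> graded_isomorphic p q q p)
  \<and> (\<forall>p q. 1 \<le> p \<longrightarrow> 1 \<le> q \<longrightarrow> 3 \<le> p + q \<longrightarrow> graded_isomorphic p (q + 4) (p + 4) q)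
  \<and> (\<forall>p q p' q'. 1 \<le> p \<longrightarrow> 1 \<le> q \<longrightarrow> 1 \<le> p' \<longrightarrow> 1 \<le> q' \<longrightarrow> 3 \<le> p + q \<longrightarrow>
        p + q = p' + q' \<longrightarrow> graded_isomorphic p q p' q' \<longrightarrow> oct_move\<^sup>*\<^sup>* (p, q) (p', q'))
  \<and> (\<forall>n. 5 \<le> n \<longrightarrow>
        \<not> graded_isomorphic n 0 0 n \<and> \<not> graded_isomorphic 0 n n 0 \<and>
        (\<forall>p q. p + q = n \<longrightarrow> (p, q) \<notin> {(n, 0), (0, n)} \<longrightarrow>
           \<not> graded_isomorphic n 0 p q \<and> \<not> graded_isomorphic p q n 0 \<and>
           \<not> graded_isomorphic 0 n p q \<and> \<not> graded_isomorphic p q 0 n))"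
proof (intro conjI allI impI)
  {
    fix p q :: nat
    assume "1 \<le> p" "1 \<le> q"
    then show "graded_isomorphic p q q p" "graded_isomorphic p (q + 4) (p + 4) q"
      by (rule graded_isomorphic_swap, rule graded_isomorphic_shift)
  }
  {
    fix p q p' q' :: nat
    assume pq: "1 \<le> p" "1 \<le> q" "1 \<le> p'" "1 \<le> q'" "p + q = p' + q'"
      and "graded_isomorphic p q p' q'"
    then have "p' mod 4 = p mod 4 \<or> p' mod 4 = q mod 4"
      using square_sign_sum_residues[OF pq] graded_isomorphic_square_sign_sum by blast
    then show "oct_move\<^sup>*\<^sup>* (p, q) (p', q')"
      by (rule oct_move_reachable[OF pq])
  }
  fix n :: nat
  assume n: "5 \<le> n"
  then show "\<not> graded_isomorphic n 0 0 n" "\<not> graded_isomorphic 0 n n 0"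
    using square_sign_sum_ends[of n] graded_isomorphic_square_sign_sum
    by (metis le_trans one_le_numeral)+
  fix p q :: nat
  assume "p + q = n" "(p, q) \<notin> {(n, 0), (0, n)}"
  then have "1 \<le> p" "1 \<le> q" "p + q = n"
    by auto
  then show "\<not> graded_isomorphic n 0 p q" "\<not> graded_isomorphic p q n 0"
    "\<not> graded_isomorphic 0 n p q" "\<not> graded_isomorphic p q 0 n"
    using square_sign_sum_extreme[OF n] graded_isomorphic_square_sign_sum by metis+
qed

end
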